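(* For all $\varepsilon,\varepsilon'\in(0,1]$ there exists $b_0$ such that for every $b\geq b_0$ there exists $\gamma_0>0$ such that for every $\gamma\in(0,\gamma_0]$ there exists $N_0$ such that for all $n,n'\geq N_0$ the following holds. Let $\Delta:=e^{\gamma\sqrt{\ln n'}}$. Let $G$ be an $(n,\varepsilon)$-digraph and let $G'$ be an induced subdigraph of $G$ on $n'$ vertices, with a perfect fractional matching $\mathbf{x}'$. Suppose $|N^*_{G,G'}(v)|\geq(\frac12+\varepsilon')n'$ for all $v\in V(G)$ and $*\in\{+,-\}$. Let $Q=(q_0,\ldots,q_m)$ be an oriented tree in $G'$ with $(n')^{1/4}+1\leq|Q|\leq3\Delta(n')^{1/4}$ and $\Delta(Q)\leq\Delta$ such that $V(Q)$ is $(G,G')$-well-behaved with respect to $\mathbf{x}'$. Let $n'':=n'-m$ and $\varepsilon'':=\varepsilon'-2(n')^{-\frac34-\frac1{18\sqrt{\ln n'}}}$. Let $u\in V(G)\setminus V(G')$ and $G'':=G[(V(G')\setminus V(Q))\cup\{u\}]$. Then for every $v\in V(G)$ and $*\in\{+,-\}$: (i) $|N^*_{G,G'}(v)\cap V(Q)|=\frac{m+1}{n'}|N^*_{G,G'}(v)|\pm(n')^{\frac14-\frac1{17\sqrt{\ln n'}}}$; (ii) $|N^*_{G,G''}(v)|\geq(\frac12+\varepsilon'')n''$; (iii) $G''$ is an $(n'',\varepsilon'')$-digraph. If moreover $\mathbf{x}'$ is $b$-normal, then additionally (iv) $G''$ has a $(1+(n')^{-\frac34-\frac1{22\sqrt{\ln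 n'}}})b$-normal perfect fractional matching $\mathbf{x}''$ with $h(\mathbf{x}'')\geq\frac{n''}{n'}h(\mathbf{x}')-n''\log\frac{n'}{n''}-(n')^{\frac14-\frac1{24\sqrt{\ln n'}}}$.
   Context: $\log=\log_2$, $\ln$ natural logarithm; $a=\beta\pm c$ means $\beta-c\leq a\leq\beta+c$. Digraphs have no loops and at most one edge from $v$ to $w$ per ordered pair. An $(n,\varepsilon)$-digraph is a digraph on $n$ vertices with every in- and out-degree at least $(\frac12+\varepsilon)n$. $N^*_{G,H}(v)=N^*_G(v)\cap V(H)$. A perfect fractional matching of a digraph $H$ is $\mathbf{x}\colon E(H)\to\mathbb{R}_{\geq0}$ with $\sum_{w\in N^+_H(v)}\mathbf{x}_{vw}=1=\sum_{w\in N^-_H(v)}\mathbf{x}_{wv}$ for all $v$; it is $b$-normal if $\frac1{b|V(H)|}\leq\mathbf{x}_e\leq\frac b{|V(H)|}$ for all $e$; $h(\mathbf{x})=\sum_e\mathbf{x}_e\log\frac1{\mathbf{x}_e}$, $h^+_{\mathbf{x}}(v)=\sum_{w\in N^+_H(v)}\mathbf{x}_{vw}\log\frac1{\mathbf{x}_{vw}}$, $h^-_{\mathbf{x}}(v)$ analogously. $\mathcal{S}_{G,G'}=\{N^*_{G,G'}(v):v\in V(G),*\in\{+,-\}\}$. A set $M\subseteq V(G')$ with $|M|\geq(n')^{1/4}$ is $(G,G')$-well-behaved with respect to $\mathbf{x}'$ if (a) $\big||M\cap S|-\frac{|M|}{n'}|S|\big|<(n')^{\frac14-\frac1{17\sqrt{\ln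 n'}}}$ for all $S\in\mathcal{S}_{G,G'}$, and (b) with $c=(n')^{-\frac34-\frac1{18\sqrt{\ln n'}}}$, for every $v\in V(G')$: $\big|\sum_{w\in N^+_{G'}(v)\cap M}\mathbf{x}'_{vw}-\frac{|M|}{n'}\big|<c$, $\big|\sum_{w\in N^+_{G'}(v)\cap M}\mathbf{x}'_{vw}\log\frac1{\mathbf{x}'_{vw}}-\frac{|M|}{n'}h^+_{\mathbf{x}'}(v)\big|<c$, and the analogous inequalities with in-neighbourhoods, $\mathbf{x}'_{wv}$ and $h^-_{\mathbf{x}'}(v)$ hold. $\Delta(Q)$ is the max degree of the underlying tree. *)

theory Defs
  imports Complex_Main
begin

definition digraph :: "'a set \<Rightarrow> ('a \<times> 'a) set \<Rightarrow> bool" where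
  "digraph V E \<longleftrightarrow> finite V \<and> E \<subseteq> V \<times> V \<and> (\<forall>v. (v, v) \<notin> E)"

definition outN :: "('a \<times> 'a) set \<Rightarrow> 'a \<Rightarrow> 'a set" where
  "outN E v = {w. (v, w) \<in> E}"

definition inN :: "('a \<times> 'a) set \<Rightarrow> 'a \<Rightarrow> 'a set" where
  "inN E v = {w. (w, v) \<in> E}"

definition induced :: "('a \<times> 'a) set \<Rightarrow> 'a set \<Rightarrow> ('a \<times> 'a) set" where
  "induced E S = E \<inter> (S \<times> S)"

definition eps_digraph :: "nat \<Rightarrow> real \<Rightarrow> 'a set \<Rightarrow> ('a \<times> 'a) set \<Rightarrow> bool" where
  "eps_digraph n eps V E \<longleftrightarrow> digraph V E \<and> card V = n \<and>
     (\<forall>v\<in>V. real (card (outN E v)) \<ge> (1/2 + eps) * real n \<and>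
             real (card (inN E v)) \<ge> (1/2 + eps) * real n)"

definition perfect_frac_matching :: "'a set \<Rightarrow> ('a \<times> 'a) set \<Rightarrow> ('a \<times> 'a \<Rightarrow> real) \<Rightarrow> bool" where
  "perfect_frac_matching V E x \<longleftrightarrow> (\<forall>e\<in>E. x e \<ge> 0) \<and>
     (\<forall>v\<in>V. (\<Sum>w\<in>outN E v. x (v, w)) = 1 \<and> (\<Sum>w\<in>inN E v. x (w, v)) = 1)"

definition b_normal :: "real \<Rightarrow> 'a set \<Rightarrow> ('a \<times> 'a) set \<Rightarrow> ('a \<times> 'a \<Rightarrow> real) \<Rightarrow> bool" where
  "b_normal b V E x \<longleftrightarrow>
     (\<forall>e\<in>E. 1 / (b * real (card V)) \<le> x e \<and> x e \<le> b / real (card V))"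

text \<open>Entropy h(x), base-2 logarithm (0 log(1/0) = 0 by Isabelle's conventions).\<close>
definition entropy :: "('a \<times> 'a) set \<Rightarrow> ('a \<times> 'a \<Rightarrow> real) \<Rightarrow> real" where
  "entropy E x = (\<Sum>e\<in>E. x e * log 2 (1 / x e))"

definition hplus :: "('a \<times> 'a) set \<Rightarrow> ('a \<times> 'a \<Rightarrow> real) \<Rightarrow> 'a \<Rightarrow> real" where
  "hplus E x v = (\<Sum>w\<in>outN E v. x (v, w) * log 2 (1 / x (v, w)))"

definition hminus :: "('a \<times> 'a) set \<Rightarrow> ('a \<times> 'a \<Rightarrow> real) \<Rightarrow> 'a \<Rightarrow> real" where
  "hminus E x v = (\<Sum>w\<in>inN E v. x (w, v) * log 2 (1 / x (w, v)))"

definition nbhd_family :: "'a set \<Rightarrow> ('a \<times> 'a) set \<Rightarrow> 'a set \<Rightarrow> 'a set set" where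
  "nbhd_family V E V' = {outN E v \<inter> V' | v. v \<in> V} \<union> {inN E v \<inter> V' | v. v \<in> V}"

definition well_behaved ::
  "'a set \<Rightarrow> ('a \<times> 'a) set \<Rightarrow> 'a set \<Rightarrow> ('a \<times> 'a \<Rightarrow> real) \<Rightarrow> 'a set \<Rightarrow> bool" where
  "well_behaved V E V' x M \<longleftrightarrow>
     (let n' = real (card V'); E' = induced E V';
          c = n' powr (- 3/4 - 1 / (18 * sqrt (ln n'))) in
      M \<subseteq> V' \<and> real (card M) \<ge> n' powr (1/4) \<and>
      (\<forall>S\<in>nbhd_family V E V'.
         \<bar>real (card (M \<inter> S)) - real (card M) / n' * real (card S)\<bar>
           < n' powr (1/4 - 1 / (17 * sqrt (ln n')))) \<and>
      (\<forall>v\<in>V'.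
         \<bar>(\<Sum>w\<in>outN E' v \<inter> M. x (v, w)) - real (card M) / n'\<bar> < c \<and>
         \<bar>(\<Sum>w\<in>outN E' v \<inter> M. x (v, w) * log 2 (1 / x (v, w)))
            - real (card M) / n' * hplus E' x v\<bar> < c \<and>
         \<bar>(\<Sum>w\<in>inN E' v \<inter> M. x (w, v)) - real (card M) / n'\<bar> < c \<and>
         \<bar>(\<Sum>w\<in>inN E' v \<inter> M. x (w, v) * log 2 (1 / x (w, v)))
            - real (card M) / n' * hminus E' x v\<bar> < c))"

text \<open>Oriented tree (VQ,EQ): a loopless digraph without opposite edge pairs whose
  underlying undirected graph is a tree (connected with |V|-1 edges).\<close>
definition oriented_tree :: "'a set \<Rightarrow> ('a \<times> 'a) set \<Rightarrow> bool" where
  "oriented_tree VQ EQ \<longleftrightarrow> digraph VQ EQ \<and> VQ \<noteq> {} \<and>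
     (\<forall>a b. (a, b) \<in> EQ \<longrightarrow> (b, a) \<notin> EQ) \<and>
     (\<forall>a\<in>VQ. \<forall>b\<in>VQ. (a, b) \<in> (EQ \<union> EQ\<inverse>)\<^sup>*) \<and>
     card EQ = card VQ - 1"

definition und_degree :: "('a \<times> 'a) set \<Rightarrow> 'a \<Rightarrow> nat" where
  "und_degree EQ v = card {w. (v, w) \<in> EQ \<or> (w, v) \<in> EQ}"

end

theory Submission
  imports Defs "HOL-Real_Asymp.Real_Asymp"
begin

(* Removing V(Q) and adding u keeps every neighbourhood proportionally intact: by part (a) of
   well-behavedness each N*(v) meets V(Q) in about (m+1)/n' |N*(v)| vertices, which gives (i)-(iii).
   For (iv), scale x' on W = V(G') - V(Q) by n'/n'' and let u spread its row and its column uniformly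
   over its out- and in-neighbours in W. By part (b) of well-behavedness all line sums are then 1 up
   to O(1/n'' + c). The row errors are spread evenly along the rows; the column errors are moved
   between edges va and va' through the common in-neighbours v of a and a', of which there are at
   least eps' n'' because all in-degrees exceed n''/2. Every weight moves by o(1/(b n'')), so
   normality survives with a slightly larger b, and the entropy only loses the edges at V(Q) (about
   a 2(m+1)/n' fraction by part (b)), the rescaling term n'' log(n'/n'') and the perturbation error. *)

lemma powr_minus_inverse_sqrt_ln:
  fixes x k a :: real
  assumes "1 < x" "0 < k"
  shows "x powr (a - 1 / (k * sqrt (ln x))) = x powr a * exp (- sqrt (ln x) / k)"
proof -
  have "sqrt (ln x) * sqrt (ln x) = ln x"
    using assms by simp
  then have "1 / (k * sqrt (ln x)) * ln x = sqrt (ln x) / k"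
    using assms by (simp add: field_simps)
  then have "x powr (1 / (k * sqrt (ln x))) = exp (sqrt (ln x) / k)"
    using assms by (simp add: powr_def)
  then show ?thesis
    using assms by (simp add: powr_diff exp_minus divide_inverse)
qed

text \<open>The inequalities between the error terms of the statement that the proof uses; each holds for
  large x because exp (sqrt (ln x)) grows slower than any power of x.\<close>

definition large_enough :: "real \<Rightarrow> real \<Rightarrow> real \<Rightarrow> bool" where
  "large_enough \<epsilon> b x \<longleftrightarrow>
     (let c = x powr (- 3/4 - 1 / (18 * sqrt (ln x)));
          \<delta> = x powr (- 3/4 - 1 / (22 * sqrt (ln x)));
          S = x powr (1/4 - 1 / (24 * sqrt (ln x)));
          e = x powr (1/4 - 1 / (17 * sqrt (ln x)))
      in 4 \<le> x \<and> 2 * b \<le> x \<and> 4 \<le> \<epsilon> * x \<and>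
         (3 * exp (sqrt (ln x)) * x powr (1/4))\<^sup>2 \<le> x \<and>
         c \<le> \<epsilon> / 8 \<and> 3/2 + e \<le> c * x \<and>
         \<delta> \<le> 1 \<and> 16 * b * (6 / x + 2 * c) \<le> \<epsilon> * \<delta> \<and>
         24 * ln x + 4 * x * c + 4 + x * \<delta> * (4 * ln x + 4) \<le> S)"

lemma eventually_large_enough:
  fixes \<epsilon> b :: real
  assumes "0 < \<epsilon>" "0 < b"
  shows "eventually (\<lambda>n. large_enough \<epsilon> b (real n)) sequentially"
proof -
  define c where "c x = x powr (- 3/4) * exp (- sqrt (ln x) / 18)" for x :: real
  define \<delta> where "\<delta> x = x powr (- 3/4) * exp (- sqrt (ln x) / 22)" for x :: real
  define S where "S x = x powr (1/4) * exp (- sqrt (ln x) / 24)" for x :: real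
  define e where "e x = x powr (1/4) * exp (- sqrt (ln x) / 17)" for x :: real
  have small: "eventually (\<lambda>x. f x \<le> K * g x) at_top"
    if "f \<in> o(g)" "0 < K" "eventually (\<lambda>x. 0 \<le> g x) at_top" for f g :: "real \<Rightarrow> real" and K
    using landau_o.smallD[OF that(1,2)] that(3) by eventually_elim auto
  have "eventually (\<lambda>x. large_enough \<epsilon> b x) at_top"
  proof -
    have "eventually (\<lambda>x. max 4 (max (2 * b) (4 / \<epsilon>)) \<le> x) at_top"
      by (rule eventually_ge_at_top)
    moreover have "eventually (\<lambda>x. (3 * exp (sqrt (ln x)) * x powr (1/4))\<^sup>2 \<le> x) at_top"
      by real_asymp
    moreover have "eventually (\<lambda>x. c x < \<epsilon> / 8) at_top"
      using assms unfolding c_def by (intro order_tendstoD(2)[where y = 0]) (real_asymp, simp)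
    moreover have "eventually (\<lambda>x. 3/2 + e x \<le> 1 * (c x * x)) at_top"
      by (rule small) (unfold c_def e_def, real_asymp, simp, real_asymp)
    moreover have "eventually (\<lambda>x. \<delta> x \<le> 1) at_top"
      unfolding \<delta>_def by real_asymp
    moreover have "eventually (\<lambda>x. 6 / x + 2 * c x \<le> \<epsilon> / (16 * b) * \<delta> x) at_top"
      by (rule small) (unfold c_def \<delta>_def, real_asymp, use assms in simp, real_asymp)
    moreover have "eventually (\<lambda>x. 24 * ln x + 4 * x * c x + 4 + x * \<delta> x * (4 * ln x + 4) \<le> 1 * S x) at_top"
      by (rule small) (unfold c_def \<delta>_def S_def, real_asymp, simp, real_asymp)
    ultimately show ?thesis
    proof eventually_elim
      case (elim x)
      then have "1 < x" "4 / \<epsilon> \<le> x" by auto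
      then have "4 \<le> \<epsilon> * x"
        using assms by (simp add: divide_le_eq mult.commute)
      moreover have "16 * b * (6 / x + 2 * c x) \<le> \<epsilon> * \<delta> x"
        using elim assms by (simp add: field_simps)
      ultimately show ?case
        using elim \<open>1 < x\<close>
        unfolding large_enough_def Let_def powr_minus_inverse_sqrt_ln[OF \<open>1 < x\<close> zero_less_numeral] c_def \<delta>_def S_def e_def
        by auto
    qed
  qed
  then show ?thesis
    by (rule eventually_compose_filterlim[OF _ filterlim_real_sequentially])
qed

lemma outN_induced [simp]: "outN (induced E S) v = (if v \<in> S then outN E v \<inter> S else {})"
  by (auto simp: outN_def induced_def)

lemma inN_induced [simp]: "inN (induced E S) v = (if v \<in> S then inN E v \<inter> S else {})"
  by (auto simp: inN_def induced_def)

lemma digraph_induced: "digraph V E \<Longrightarrow> S \<subseteq> V \<Longrightarrow> digraph S (induced E S)"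
  by (auto simp: digraph_def induced_def intro: finite_subset)

lemma eps_digraph_induced:
  assumes "digraph V E" "S \<subseteq> V" "card S = k"
    and "\<forall>v\<in>S. (1/2 + \<epsilon>) * real k \<le> real (card (outN E v \<inter> S)) \<and>
               (1/2 + \<epsilon>) * real k \<le> real (card (inN E v \<inter> S))"
  shows "eps_digraph k \<epsilon> S (induced E S)"
  using assms digraph_induced[OF assms(1,2)] by (simp add: eps_digraph_def)

lemma sum_swap_outN_inN:
  assumes "finite W"
  shows "(\<Sum>v\<in>W. \<Sum>w\<in>outN E v \<inter> W. h v w) = (\<Sum>w\<in>W. \<Sum>v\<in>inN E w \<inter> W. h v w)"
proof -
  have "outN E v \<inter> W = {w\<in>W. (v, w) \<in> E}" "inN E w \<inter> W = {v\<in>W. (v, w) \<in> E}" for v w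
    by (auto simp: outN_def inN_def)
  then show ?thesis
    using sum.swap_restrict[OF assms assms, of h "\<lambda>v w. (v, w) \<in> E"] by simp
qed

lemma sum_edges_by_tail:
  assumes "finite V" "E \<subseteq> V \<times> V"
  shows "(\<Sum>v\<in>V. \<Sum>w\<in>outN E v \<inter> P. g (v, w)) = (\<Sum>e\<in>{e\<in>E. snd e \<in> P}. g e)"
proof -
  have "finite (outN E v \<inter> P)" for v
    using assms by (auto simp: outN_def intro: finite_subset)
  then have "(\<Sum>v\<in>V. \<Sum>w\<in>outN E v \<inter> P. g (v, w)) = (\<Sum>e\<in>Sigma V (\<lambda>v. outN E v \<inter> P). g e)"
    using sum.Sigma[OF assms(1), of "\<lambda>v. outN E v \<inter> P" "\<lambda>v w. g (v, w)"] by simp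
  also have "Sigma V (\<lambda>v. outN E v \<inter> P) = {e\<in>E. snd e \<in> P}"
    using assms by (auto simp: outN_def)
  finally show ?thesis .
qed

lemma sum_edges_by_head:
  assumes "finite V" "E \<subseteq> V \<times> V"
  shows "(\<Sum>w\<in>V. \<Sum>v\<in>inN E w \<inter> P. g (v, w)) = (\<Sum>e\<in>{e\<in>E. fst e \<in> P}. g e)"
proof -
  have "E\<inverse> \<subseteq> V \<times> V" "inN E w = outN (E\<inverse>) w" for w
    using assms by (auto simp: inN_def outN_def)
  then have "(\<Sum>w\<in>V. \<Sum>v\<in>inN E w \<inter> P. g (v, w)) = (\<Sum>e\<in>{e\<in>E\<inverse>. snd e \<in> P}. g (prod.swap e))"
    using sum_edges_by_tail[OF assms(1), where E = "E\<inverse>" and P = P and g = "g \<circ> prod.swap"] by simp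
  also have "\<dots> = (\<Sum>e\<in>{e\<in>E. fst e \<in> P}. g e)"
    by (rule sum.reindex_bij_witness[of _ prod.swap prod.swap]) auto
  finally show ?thesis .
qed

text \<open>Each common in-neighbour v of a and a' shifts f a / (|W| |C|) from the edge (v, a) to the
  edge (v, a'), where C is the set of these common in-neighbours. Row sums do not change, column a
  loses f a in total, and the gains of the columns cancel when f sums to 0.\<close>

definition column_shift :: "'a set \<Rightarrow> ('a \<times> 'a) set \<Rightarrow> ('a \<Rightarrow> real) \<Rightarrow> 'a \<Rightarrow> 'a \<Rightarrow> 'a \<Rightarrow> real" where
  "column_shift W E f a a' v =
    (if v \<in> inN E a \<inter> inN E a' \<inter> W then f a / (card W * card (inN E a \<inter> inN E a' \<inter> W)) else 0)"

definition column_correction :: "'a set \<Rightarrow> ('a \<times> 'a) set \<Rightarrow> ('a \<Rightarrow> real) \<Rightarrow> 'a \<Rightarrow> 'a \<Rightarrow> real" where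
  "column_correction W E f v w = (\<Sum>a\<in>W. column_shift W E f a w v) - (\<Sum>a'\<in>W. column_shift W E f w a' v)"

lemma column_correction_row_sum:
  assumes "finite W"
  shows "(\<Sum>w\<in>outN E v \<inter> W. column_correction W E f v w) = 0"
proof -
  have "column_correction W E f v w = 0" if "w \<in> W - outN E v \<inter> W" for w
    using that unfolding column_correction_def column_shift_def
    by (auto simp: outN_def inN_def intro!: sum.neutral)
  then have "(\<Sum>w\<in>outN E v \<inter> W. column_correction W E f v w) = (\<Sum>w\<in>W. column_correction W E f v w)"
    using assms by (intro sum.mono_neutral_left) auto
  also have "\<dots> = 0"
    unfolding column_correction_def sum_subtractf
    using sum.swap[of "\<lambda>a w. column_shift W E f a w v" W W] by simp
  finally show ?thesis .
qed

lemma column_correction_col_sum: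
  assumes "finite W" "(\<Sum>a\<in>W. f a) = 0" "w \<in> W"
    and common: "\<forall>a\<in>W. inN E a \<inter> inN E w \<inter> W \<noteq> {}"
  shows "(\<Sum>v\<in>inN E w \<inter> W. column_correction W E f v w) = - f w"
proof -
  have shift: "(\<Sum>v\<in>inN E w \<inter> W. column_shift W E f a a' v) = f a / card W"
    if "a \<in> W" "a' \<in> W" "a = w \<or> a' = w" for a a'
  proof -
    define C where "C = inN E a \<inter> inN E a' \<inter> W"
    have "C \<noteq> {}" "C \<subseteq> inN E w \<inter> W" "finite C"
      using common that assms(1) unfolding C_def by (auto simp: Int_ac)
    have "(\<Sum>v\<in>inN E w \<inter> W. column_shift W E f a a' v) = (\<Sum>v\<in>inN E w \<inter> W \<inter> C. f a / (card W * card C))"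
      unfolding column_shift_def C_def[symmetric] by (rule sum.inter_restrict[symmetric]) (use assms(1) in simp)
    also have "inN E w \<inter> W \<inter> C = C"
      using \<open>C \<subseteq> inN E w \<inter> W\<close> by auto
    finally show ?thesis
      using \<open>C \<noteq> {}\<close> \<open>finite C\<close> by simp
  qed
  have "(\<Sum>v\<in>inN E w \<inter> W. column_correction W E f v w)
      = (\<Sum>a\<in>W. \<Sum>v\<in>inN E w \<inter> W. column_shift W E f a w v)
        - (\<Sum>a'\<in>W. \<Sum>v\<in>inN E w \<inter> W. column_shift W E f w a' v)"
    unfolding column_correction_def sum_subtractf by (simp add: sum.swap[of _ "inN E w \<inter> W"])
  also have "\<dots> = (\<Sum>a\<in>W. f a / card W) - (\<Sum>a'\<in>W. f w / card W)"
    using assms(3) shift by simp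
  also have "\<dots> = - f w"
    using assms by (auto simp: sum_divide_distrib[symmetric])
  finally show ?thesis .
qed

lemma column_correction_bound:
  assumes "finite W" "v \<in> W" "w \<in> W" "0 < k" "\<forall>a\<in>W. \<bar>f a\<bar> \<le> F"
    and common: "\<forall>a\<in>W. \<forall>a'\<in>W. k \<le> real (card (inN E a \<inter> inN E a' \<inter> W))"
  shows "\<bar>column_correction W E f v w\<bar> \<le> 2 * F / k"
proof -
  have shift: "\<bar>column_shift W E f a a' v\<bar> \<le> F / k / card W" if "a \<in> W" "a' \<in> W" for a a'
  proof -
    have "\<bar>f a\<bar> / card (inN E a \<inter> inN E a' \<inter> W) \<le> F / k"
      using assms that by (intro frac_le) auto
    then have "\<bar>f a\<bar> / card (inN E a \<inter> inN E a' \<inter> W) / card W \<le> F / k / card W"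
      by (rule divide_right_mono) simp
    moreover have "0 \<le> F / k / card W"
      using assms that by (meson abs_ge_zero divide_nonneg_nonneg of_nat_0_le_iff order_trans less_imp_le)
    ultimately show ?thesis
      unfolding column_shift_def by (simp add: abs_mult mult.commute)
  qed
  have "(\<Sum>a\<in>W. \<bar>column_shift W E f a w v\<bar>) \<le> F / k" "(\<Sum>a'\<in>W. \<bar>column_shift W E f w a' v\<bar>) \<le> F / k"
    using shift assms by (intro sum_bounded_above_divide; force)+
  then have "\<bar>\<Sum>a\<in>W. column_shift W E f a w v\<bar> \<le> F / k" "\<bar>\<Sum>a'\<in>W. column_shift W E f w a' v\<bar> \<le> F / k"
    by (auto intro: order_trans[OF sum_abs])
  moreover have "\<bar>column_correction W E f v w\<bar>
      \<le> \<bar>\<Sum>a\<in>W. column_shift W E f a w v\<bar> + \<bar>\<Sum>a'\<in>W. column_shift W E f w a' v\<bar>"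
    unfolding column_correction_def by (rule abs_triangle_ineq4)
  ultimately show ?thesis
    by linarith
qed

lemma prescribed_line_sums:
  fixes W :: "'a set" and E :: "('a \<times> 'a) set" and z :: "'a \<times> 'a \<Rightarrow> real"
    and R S :: "'a \<Rightarrow> real" and r s d k :: real
  assumes W: "finite W" and balanced: "(\<Sum>v\<in>W. R v) = (\<Sum>w\<in>W. S w)"
    and d: "0 < d" "\<forall>v\<in>W. d \<le> real (card (outN E v \<inter> W))"
    and k: "0 < k" "\<forall>a\<in>W. \<forall>a'\<in>W. k \<le> real (card (inN E a \<inter> inN E a' \<inter> W))"
    and rows: "\<forall>v\<in>W. \<bar>(\<Sum>w\<in>outN E v \<inter> W. z (v, w)) - R v\<bar> \<le> r"
    and cols: "\<forall>w\<in>W. \<bar>(\<Sum>v\<in>inN E w \<inter> W. z (v, w)) - S w\<bar> \<le> s"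
  obtains z' where "\<forall>v\<in>W. (\<Sum>w\<in>outN E v \<inter> W. z' (v, w)) = R v"
    and "\<forall>w\<in>W. (\<Sum>v\<in>inN E w \<inter> W. z' (v, w)) = S w"
    and "\<forall>v\<in>W. \<forall>w\<in>W. \<bar>z' (v, w) - z (v, w)\<bar> \<le> r / d + 2 * (s + card W * r / d) / k"
proof -
  define \<rho> where "\<rho> v = ((\<Sum>w\<in>outN E v \<inter> W. z (v, w)) - R v) / card (outN E v \<inter> W)" for v
  define z1 where "z1 e = z e - \<rho> (fst e)" for e
  define f where "f w = (\<Sum>v\<in>inN E w \<inter> W. z1 (v, w)) - S w" for w
  have out_pos: "0 < card (outN E v \<inter> W)" if "v \<in> W" for v
    using d that by fastforce
  have rows_z1: "(\<Sum>w\<in>outN E v \<inter> W. z1 (v, w)) = R v" if "v \<in> W" for v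
    using out_pos[OF that] unfolding z1_def \<rho>_def sum_subtractf by simp
  have \<rho>_bound: "\<bar>\<rho> v\<bar> \<le> r / d" if "v \<in> W" for v
    unfolding \<rho>_def abs_divide using rows that d out_pos[OF that] by (intro frac_le) auto
  have f_bound: "\<forall>w\<in>W. \<bar>f w\<bar> \<le> s + card W * (r / d)"
  proof
    fix w assume "w \<in> W"
    have "\<bar>\<Sum>v\<in>inN E w \<inter> W. \<rho> v\<bar> \<le> card (inN E w \<inter> W) * (r / d)"
      using \<rho>_bound by (intro order_trans[OF sum_abs] sum_bounded_above) auto
    also have "\<dots> \<le> card W * (r / d)"
      using W \<rho>_bound \<open>w \<in> W\<close> by (intro mult_right_mono) (auto intro: card_mono order_trans[OF abs_ge_zero])
    finally show "\<bar>f w\<bar> \<le> s + card W * (r / d)"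
      using cols[rule_format, OF \<open>w \<in> W\<close>] unfolding f_def z1_def sum_subtractf fst_conv by linarith
  qed
  have "(\<Sum>w\<in>W. f w) = (\<Sum>v\<in>W. \<Sum>w\<in>outN E v \<inter> W. z1 (v, w)) - (\<Sum>w\<in>W. S w)"
    unfolding f_def sum_subtractf sum_swap_outN_inN[OF W] ..
  then have "(\<Sum>w\<in>W. f w) = 0"
    using rows_z1 balanced by simp
  moreover have "\<forall>a\<in>W. \<forall>a'\<in>W. inN E a \<inter> inN E a' \<inter> W \<noteq> {}"
    using k by fastforce
  ultimately have y_cols: "\<forall>w\<in>W. (\<Sum>v\<in>inN E w \<inter> W. column_correction W E f v w) = - f w"
    using W by (auto intro: column_correction_col_sum)
  have y_bound: "\<forall>v\<in>W. \<forall>w\<in>W. \<bar>column_correction W E f v w\<bar> \<le> 2 * (s + card W * (r / d)) / k"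
    using column_correction_bound[OF W _ _ k(1) f_bound k(2)] by blast
  show ?thesis
  proof (rule that[of "\<lambda>e. z1 e + column_correction W E f (fst e) (snd e)"], simp_all only: fst_conv snd_conv)
    show "\<forall>v\<in>W. (\<Sum>w\<in>outN E v \<inter> W. z1 (v, w) + column_correction W E f v w) = R v"
      using rows_z1 column_correction_row_sum[OF W] by (simp add: sum.distrib)
    show "\<forall>w\<in>W. (\<Sum>v\<in>inN E w \<inter> W. z1 (v, w) + column_correction W E f v w) = S w"
      using y_cols by (simp add: sum.distrib f_def)
    show "\<forall>v\<in>W. \<forall>w\<in>W. \<bar>z1 (v, w) + column_correction W E f v w - z (v, w)\<bar>
        \<le> r / d + 2 * (s + card W * r / d) / k"
      using \<rho>_bound y_bound unfolding z1_def fst_conv times_divide_eq_right by (smt (verit))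
  qed
qed

lemma ln_2_ge_half: "1/2 \<le> ln (2::real)"
  using ln_le_minus_one[of "1/2 :: real"] by (simp add: ln_div)

lemma log_2_le_twice_ln:
  assumes "0 \<le> ln y"
  shows "log 2 y \<le> 2 * ln y"
proof -
  have "ln y * 1 \<le> ln y * (2 * ln 2)"
    using assms ln_2_ge_half by (intro mult_left_mono) auto
  then show ?thesis
    by (simp add: log_def divide_le_eq algebra_simps)
qed

lemma plogp_nonneg:
  fixes t :: real
  assumes "0 \<le> t" "t \<le> 1"
  shows "0 \<le> t * log 2 (1 / t)"
  using assms by (cases "t = 0") auto

lemma plogp_perturb:
  fixes s t Y K :: real
  assumes "0 < t" "t \<le> 1" "0 < K" "1 / K \<le> t" "0 < s" "s \<le> 2 * t" "\<bar>s - t\<bar> \<le> Y"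
  shows "t * log 2 (1 / t) - Y * (log 2 K + 4) \<le> s * log 2 (1 / s)"
proof -
  have Y: "0 \<le> Y"
    using assms(7) by linarith
  have "s * (1 - s / t) = (s / t) * (t - s)" "s / t \<le> 2"
    using assms by (auto simp: field_simps)
  moreover have "\<bar>(s / t) * (t - s)\<bar> \<le> 2 * Y"
    using assms mult_mono[OF \<open>s / t \<le> 2\<close> assms(7)] by (simp add: abs_mult abs_minus_commute)
  moreover have "s * (1 - s / t) \<le> s * ln (t / s)"
    using ln_le_minus_one[of "s / t"] assms by (intro mult_left_mono) (auto simp: ln_div)
  ultimately have "- (2 * Y) \<le> s * ln (t / s)"
    by linarith
  then have "- (2 * Y) / ln 2 \<le> s * log 2 (t / s)"
    unfolding log_def times_divide_eq_right by (rule divide_right_mono) simp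
  moreover have "2 * Y / ln 2 \<le> 2 * Y / (1/2)"
    using ln_2_ge_half Y by (intro divide_left_mono) auto
  ultimately have tail: "- (4 * Y) \<le> s * log 2 (t / s)"
    by simp
  have "1 / t \<le> K"
    using assms by (simp add: divide_le_eq mult.commute)
  then have "0 \<le> log 2 (1 / t)" "log 2 (1 / t) \<le> log 2 K"
    using assms by (auto intro: log_mono)
  then have "\<bar>(s - t) * log 2 (1 / t)\<bar> \<le> Y * log 2 K"
    unfolding abs_mult using assms(7) Y by (simp add: mult_mono)
  then have head: "- (Y * log 2 K) \<le> (s - t) * log 2 (1 / t)"
    by linarith
  have "s * log 2 (1 / s) = t * log 2 (1 / t) + (s - t) * log 2 (1 / t) + s * log 2 (t / s)"
    using assms by (simp add: log_divide algebra_simps)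
  with head tail show ?thesis
    by (simp add: algebra_simps)
qed

lemma sum_plogp_scale:
  fixes x :: "'e \<Rightarrow> real"
  assumes "0 < \<alpha>" "\<forall>e\<in>F. 0 < x e"
  shows "(\<Sum>e\<in>F. \<alpha> * x e * log 2 (1 / (\<alpha> * x e)))
    = \<alpha> * (\<Sum>e\<in>F. x e * log 2 (1 / x e)) - \<alpha> * log 2 \<alpha> * (\<Sum>e\<in>F. x e)"
proof -
  have "\<alpha> * x e * log 2 (1 / (\<alpha> * x e)) = \<alpha> * (x e * log 2 (1 / x e)) - \<alpha> * log 2 \<alpha> * x e"
    if "e \<in> F" for e
    using assms that by (simp add: log_divide log_mult algebra_simps)
  then show ?thesis
    by (simp add: sum_subtractf sum_distrib_left)
qed

lemma perfect_frac_matching_le_one: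
  assumes "perfect_frac_matching V E x" "digraph V E" "e \<in> E"
  shows "x e \<le> 1"
proof -
  obtain v w where e: "e = (v, w)"
    by force
  have "v \<in> V" "w \<in> outN E v" "outN E v \<subseteq> V"
    using assms e by (auto simp: digraph_def outN_def)
  then have "x (v, w) \<le> (\<Sum>w\<in>outN E v. x (v, w))"
    using assms by (intro member_le_sum) (auto simp: perfect_frac_matching_def digraph_def outN_def
        intro: finite_subset)
  then show ?thesis
    using assms \<open>v \<in> V\<close> e by (simp add: perfect_frac_matching_def)
qed

lemma sum_plogp_le_entropy:
  assumes "perfect_frac_matching V E x" "digraph V E" "F \<subseteq> E"
  shows "(\<Sum>e\<in>F. x e * log 2 (1 / x e)) \<le> entropy E x"
  unfolding entropy_def
proof (rule sum_mono2)
  show "finite E"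
    using assms(2) by (auto simp: digraph_def intro: finite_subset[of _ "V \<times> V"])
  show "0 \<le> x e * log 2 (1 / x e)" if "e \<in> E - F" for e
    using assms(1) that perfect_frac_matching_le_one[OF assms(1,2)]
    by (intro plogp_nonneg) (auto simp: perfect_frac_matching_def)
qed (use assms in simp)

lemma sum_perfect_frac_matching:
  assumes "perfect_frac_matching V E x" "digraph V E"
  shows "(\<Sum>e\<in>E. x e) = card V"
  using assms sum_edges_by_tail[where V = V and E = E and P = UNIV and g = x]
  by (simp add: perfect_frac_matching_def digraph_def)

lemma sum_hplus_eq_entropy: "digraph V E \<Longrightarrow> (\<Sum>v\<in>V. hplus E x v) = entropy E x"
  using sum_edges_by_tail[where V = V and E = E and P = UNIV and g = "\<lambda>e. x e * log 2 (1 / x e)"]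
  by (simp add: hplus_def entropy_def digraph_def)

lemma sum_hminus_eq_entropy: "digraph V E \<Longrightarrow> (\<Sum>v\<in>V. hminus E x v) = entropy E x"
  using sum_edges_by_head[where V = V and E = E and P = UNIV and g = "\<lambda>e. x e * log 2 (1 / x e)"]
  by (simp add: hminus_def entropy_def digraph_def)

lemma entropy_le_card_log:
  assumes "perfect_frac_matching V E x" "digraph V E" "0 < K" "\<forall>e\<in>E. 1 / K \<le> x e"
  shows "entropy E x \<le> card V * log 2 K"
proof -
  have "x e * log 2 (1 / x e) \<le> x e * log 2 K" if "e \<in> E" for e
  proof -
    have "0 < x e" "1 / x e \<le> K"
      using assms that by (auto simp: divide_le_eq mult.commute order_less_le_trans[of 0 "1 / K"])
    then show ?thesis
      by (intro mult_left_mono log_mono) auto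
  qed
  then have "entropy E x \<le> (\<Sum>e\<in>E. x e) * log 2 K"
    unfolding entropy_def sum_distrib_right by (rule sum_mono)
  then show ?thesis
    using sum_perfect_frac_matching[OF assms(1,2)] by simp
qed

lemma entropy_induced_diff_ge:
  fixes x :: "'a \<times> 'a \<Rightarrow> real" and t c :: real
  assumes pfm: "perfect_frac_matching V F x" and dig: "digraph V F"
    and out: "\<forall>v\<in>V. (\<Sum>w\<in>outN F v \<inter> M. x (v, w) * log 2 (1 / x (v, w))) \<le> t * hplus F x v + c"
    and inn: "\<forall>v\<in>V. (\<Sum>w\<in>inN F v \<inter> M. x (w, v) * log 2 (1 / x (w, v))) \<le> t * hminus F x v + c"
  shows "(1 - 2 * t) * entropy F x - 2 * real (card V) * c \<le> (\<Sum>e\<in>induced F (V - M). x e * log 2 (1 / x e))"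
proof -
  let ?\<phi> = "\<lambda>e. x e * log 2 (1 / x e)"
  define Q1 where "Q1 = {e\<in>F. snd e \<in> M}"
  define Q2 where "Q2 = {e\<in>F. fst e \<in> M}"
  have F: "finite V" "finite F" "F \<subseteq> V \<times> V"
    using dig by (auto simp: digraph_def intro: finite_subset)
  have nonneg: "0 \<le> ?\<phi> e" if "e \<in> F" for e
    using pfm that perfect_frac_matching_le_one[OF pfm dig]
    by (intro plogp_nonneg) (auto simp: perfect_frac_matching_def)
  have split: "entropy F x = sum ?\<phi> (F - induced F (V - M)) + sum ?\<phi> (induced F (V - M))"
    unfolding entropy_def using F by (intro sum.subset_diff) (auto simp: induced_def)
  have "sum ?\<phi> (F - induced F (V - M)) \<le> sum ?\<phi> (Q1 \<union> Q2)"
    using F nonneg by (intro sum_mono2) (auto simp: Q1_def Q2_def induced_def)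
  also have "\<dots> = sum ?\<phi> Q1 + sum ?\<phi> Q2 - sum ?\<phi> (Q1 \<inter> Q2)"
    using F by (intro sum_Un) (auto simp: Q1_def Q2_def)
  also have "\<dots> \<le> sum ?\<phi> Q1 + sum ?\<phi> Q2"
    using nonneg sum_nonneg[of "Q1 \<inter> Q2" ?\<phi>] by (force simp: Q1_def)
  finally have outside: "sum ?\<phi> (F - induced F (V - M)) \<le> sum ?\<phi> Q1 + sum ?\<phi> Q2" .
  have "sum ?\<phi> Q1 \<le> (\<Sum>v\<in>V. t * hplus F x v + c)"
    unfolding Q1_def sum_edges_by_tail[OF F(1,3), symmetric] using out by (intro sum_mono) auto
  also have "\<dots> = t * entropy F x + card V * c"
    using sum_hplus_eq_entropy[OF dig] by (simp add: sum.distrib sum_distrib_left[symmetric])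
  finally have Q1: "sum ?\<phi> Q1 \<le> t * entropy F x + card V * c" .
  have "sum ?\<phi> Q2 \<le> (\<Sum>v\<in>V. t * hminus F x v + c)"
    unfolding Q2_def sum_edges_by_head[OF F(1,3), symmetric] using inn by (intro sum_mono) auto
  also have "\<dots> = t * entropy F x + card V * c"
    using sum_hminus_eq_entropy[OF dig] by (simp add: sum.distrib sum_distrib_left[symmetric])
  finally have Q2: "sum ?\<phi> Q2 \<le> t * entropy F x + card V * c" .
  from split outside Q1 Q2 show ?thesis
    by (simp add: algebra_simps)
qed

lemma degree_bound_arith:
  fixes k X e c \<epsilon> n m :: real
  assumes "(1/2 + \<epsilon>) * n \<le> k" "X \<le> (m + 1) / n * k + e" "3/2 + e \<le> c * n"
    and "0 \<le> m" "m + 1 \<le> n" "m \<le> n / 2" "0 < \<epsilon>" "\<epsilon> \<le> 1" "0 < c"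
  shows "(1/2 + (\<epsilon> - 2 * c)) * (n - m) \<le> k - X"
proof -
  have "0 \<le> 1 - (m + 1) / n"
    using assms by (simp add: field_simps)
  then have "(1/2 + \<epsilon>) * n * (1 - (m + 1) / n) \<le> k * (1 - (m + 1) / n)"
    by (rule mult_right_mono[OF assms(1)])
  moreover have "(1/2 + \<epsilon>) * n * (1 - (m + 1) / n) = (1/2 + \<epsilon>) * (n - m) - (1/2 + \<epsilon>)"
    using assms by (simp add: field_simps)
  moreover have "c * n \<le> 2 * c * (n - m)"
    using assms mult_left_mono[of "n / 2" "n - m" "2 * c"] by simp
  moreover have "k * (1 - (m + 1) / n) = k - (m + 1) / n * k"
    "(1/2 + (\<epsilon> - 2 * c)) * (n - m) = (1/2 + \<epsilon>) * (n - m) - 2 * c * (n - m)"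
    by (simp_all add: algebra_simps)
  ultimately show ?thesis
    using assms by linarith
qed

lemma scaled_log_term_le:
  fixes n N m l T :: real
  assumes N: "0 < N" "N = n - m" "n / 2 \<le> N" and m: "0 \<le> m" "m\<^sup>2 \<le> n"
    and T: "0 \<le> T" "T \<le> N - 1" and l: "0 \<le> l" "l \<le> 2 * m / N"
  shows "n / N * l * T \<le> N * l + 4"
proof -
  have "0 < n"
    using N m by linarith
  have "m * l \<le> m * (2 * m / N)"
    using m l by (intro mult_left_mono) auto
  also have "\<dots> = 2 * m\<^sup>2 / N"
    by (simp add: power2_eq_square)
  also have "\<dots> \<le> 2 * n / (n / 2)"
    using m N by (intro frac_le) auto
  also have "\<dots> = 4"
    using \<open>0 < n\<close> by simp
  finally have ml: "m * l \<le> 4" .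
  have "0 \<le> n / N * l"
    using \<open>0 < n\<close> N(1) l(1) by simp
  then have "n / N * l * T \<le> n / N * l * (N - 1)"
    by (rule mult_left_mono[OF T(2)])
  also have "\<dots> \<le> n * l"
    using N l \<open>0 < n\<close> by (simp add: field_simps)
  also have "\<dots> = N * l + m * l"
    unfolding N(2) by (simp add: algebra_simps)
  finally show ?thesis
    using ml by simp
qed

lemma entropy_bound_arith:
  fixes H n N m c \<delta> S K T P h l :: real
  assumes n: "0 < n" and N: "N = n - m" "n / 2 \<le> N" and m: "0 \<le> m" "m\<^sup>2 \<le> n"
    and H: "0 \<le> H" "H \<le> n * K" and K: "0 \<le> K"
    and P: "(1 - 2 * ((m + 1) / n)) * H - 2 * n * c \<le> P"
    and T: "0 \<le> T" "T \<le> N - 1" and l: "0 \<le> l" "l \<le> 2 * m / N"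
    and h: "n / N * P - n / N * l * T - n * \<delta> * (K + 4) \<le> h"
    and S: "6 * K + 4 * n * c + 4 + n * \<delta> * (K + 4) \<le> S" and c: "0 < c"
  shows "N / n * H - N * l - S \<le> h"
proof -
  have pos: "0 < N" "0 < n"
    using n N by auto
  \<comment> \<open>Scaling by n/N turns the coefficient of H into N/n - (2n + m^2)/(nN), and 2n + m^2 \<le> 6N.\<close>
  have coeff: "n / N * (1 - 2 * ((m + 1) / n)) = N / n - (2 * n + m\<^sup>2) / (n * N)"
    using pos unfolding N(1) by (simp add: field_simps power2_eq_square)
  have "n / N * ((1 - 2 * ((m + 1) / n)) * H - 2 * n * c) \<le> n / N * P"
    using P pos by (intro mult_left_mono) auto
  moreover have "n / N * ((1 - 2 * ((m + 1) / n)) * H - 2 * n * c)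
      = (n / N * (1 - 2 * ((m + 1) / n))) * H - n / N * (2 * n * c)"
    by (simp add: algebra_simps)
  moreover have "(n / N * (1 - 2 * ((m + 1) / n))) * H
      = N / n * H - (2 * n + m\<^sup>2) / (n * N) * H"
    unfolding coeff by (rule left_diff_distrib)
  moreover have "n / N * (2 * n * c) \<le> 4 * n * c"
    using N pos c by (simp add: field_simps)
  ultimately have P': "N / n * H - (2 * n + m\<^sup>2) / (n * N) * H - 4 * n * c \<le> n / N * P"
    by linarith
  have "(2 * n + m\<^sup>2) / (n * N) * H \<le> 6 * K"
  proof -
    have "(2 * n + m\<^sup>2) / (n * N) * H \<le> (2 * n + m\<^sup>2) / (n * N) * (n * K)"
      using H pos m by (intro mult_left_mono) auto
    also have "\<dots> = (2 * n + m\<^sup>2) / N * K"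
      using pos by (simp add: field_simps)
    also have "\<dots> \<le> 6 * K"
      using N m pos K by (intro mult_right_mono) (auto simp: divide_le_eq)
    finally show ?thesis .
  qed
  moreover have "n / N * l * T \<le> N * l + 4"
    using scaled_log_term_le[OF pos(1) N m T l] .
  ultimately show ?thesis
    using P' h S by linarith
qed

lemma normal_of_close:
  fixes t s \<delta> b K :: real
  assumes "0 < \<delta>" "\<delta> \<le> 1" "2 \<le> b" "0 < K" "1 / (b * K) \<le> t" "t \<le> b / K"
    and "\<bar>s - t\<bar> \<le> \<delta> / (2 * b * K)"
  shows "1 / ((1 + \<delta>) * b * K) \<le> s \<and> s \<le> (1 + \<delta>) * b / K"
proof
  have bK: "0 < b * K"
    using assms by simp
  have "1 / (2 * b) \<le> 1"
    using assms by simp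
  then have "1 / (2 * b) \<le> b"
    using assms by linarith
  then have "\<delta> / K * (1 / (2 * b)) \<le> \<delta> / K * b"
    using assms by (intro mult_left_mono) auto
  then have "\<delta> / (2 * b * K) \<le> \<delta> * b / K"
    by (simp add: field_simps)
  then show "s \<le> (1 + \<delta>) * b / K"
    using assms by (simp add: abs_le_iff add_divide_distrib distrib_right)
  have "1 \<le> (1 - \<delta> / 2) * (1 + \<delta>)"
    using assms by (simp add: algebra_simps)
  then have "1 / (1 + \<delta>) \<le> 1 - \<delta> / 2"
    using assms by (simp add: divide_le_eq mult.commute)
  then have "1 / (b * K) * (1 / (1 + \<delta>)) \<le> 1 / (b * K) * (1 - \<delta> / 2)"
    using bK by (intro mult_left_mono) auto
  then have "1 / ((1 + \<delta>) * b * K) \<le> (1 - \<delta> / 2) / (b * K)"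
    by (simp add: mult.commute mult.left_commute)
  also have "\<dots> = 1 / (b * K) - \<delta> / (2 * b * K)"
    using bK by (simp add: diff_divide_distrib)
  also have "\<dots> \<le> s"
    using assms by (simp add: abs_le_iff)
  finally show "1 / ((1 + \<delta>) * b * K) \<le> s" .
qed

definition uniform_on :: "'a set \<Rightarrow> 'a \<Rightarrow> real" where
  "uniform_on S v = (if v \<in> S then 1 / card S else 0)"

lemma uniform_on_nonneg [simp]: "0 \<le> uniform_on S v"
  by (simp add: uniform_on_def)

lemma uniform_on_le:
  fixes K :: real
  assumes "0 < K" "K \<le> 2 * card S"
  shows "uniform_on S v \<le> 2 / K"
  using assms by (auto simp: uniform_on_def field_simps)

lemma uniform_on_normal:
  fixes K b :: real
  assumes "2 \<le> b" "0 < K" "K \<le> 2 * card S" "card S \<le> K" "v \<in> S"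
  shows "1 / (b * K) \<le> uniform_on S v \<and> uniform_on S v \<le> b / K"
proof -
  have "0 < card S"
    using assms by linarith
  moreover have "K \<le> b * card S" "card S \<le> b * K"
    using assms mult_right_mono[of 2 b "real (card S)"] mult_right_mono[of 1 b K] by linarith+
  ultimately have "1 / (b * K) \<le> 1 / card S" "1 / card S \<le> b / K"
    using assms by (simp_all add: field_simps)
  then show ?thesis
    using assms by (simp add: uniform_on_def)
qed

lemma sum_uniform_on:
  assumes "finite T" "S \<subseteq> T" "S \<noteq> {}"
  shows "(\<Sum>v\<in>T. uniform_on S v) = 1"
proof -
  have "(\<Sum>v\<in>T. uniform_on S v) = (\<Sum>v\<in>S. 1 / card S)"
    using assms unfolding uniform_on_def by (simp add: sum.If_cases Int_absorb1)
  then show ?thesis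
    using assms by (simp add: finite_subset)
qed

lemma rebalancing_error_le:
  fixes r \<epsilon> K w :: real
  assumes "0 \<le> r" "0 < \<epsilon>" "\<epsilon> \<le> 1" "0 < K" "w \<le> K"
  shows "r / (K / 2) + 2 * (r + w * r / (K / 2)) / (\<epsilon> * K) \<le> 8 * r / (\<epsilon> * K)"
proof -
  have "\<epsilon> * K \<le> K"
    using assms by (simp add: mult_left_le_one_le)
  then have "2 * r / K \<le> 2 * r / (\<epsilon> * K)"
    using assms by (intro divide_left_mono) (auto intro: mult_pos_pos)
  moreover have "w * r / (K / 2) \<le> 2 * r"
  proof -
    have "w * r \<le> K * r"
      using assms by (intro mult_right_mono) auto
    then have "w * r / (K / 2) \<le> K * r / (K / 2)"
      using assms by (intro divide_right_mono) auto
    then show ?thesis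
      using assms by simp
  qed
  then have "2 * (r + w * r / (K / 2)) / (\<epsilon> * K) \<le> 6 * r / (\<epsilon> * K)"
    using assms by (intro divide_right_mono) auto
  moreover have "8 * r / (\<epsilon> * K) = 2 * r / (\<epsilon> * K) + 6 * r / (\<epsilon> * K)"
    unfolding add_divide_distrib[symmetric] by simp
  ultimately show ?thesis
    by (simp add: mult.commute)
qed

lemma le_half_of_square_le:
  fixes x y :: real
  assumes "4 \<le> x" "y\<^sup>2 \<le> x"
  shows "y \<le> x / 2"
proof -
  have "y \<le> sqrt x"
    using assms(2) real_le_rsqrt by blast
  moreover have "2 * sqrt x \<le> sqrt x * sqrt x"
    using assms(1) real_le_rsqrt[of 2 x] by (intro mult_right_mono) auto
  ultimately show ?thesis
    using assms(1) by simp
qed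

locale tree_exchange =
  fixes V :: "'a set" and E :: "('a \<times> 'a) set" and V' VQ :: "'a set" and u :: 'a
    and x' :: "'a \<times> 'a \<Rightarrow> real" and n' m :: nat and b c \<epsilon> :: real
  assumes digraph: "digraph V E" and V'_subset: "V' \<subseteq> V" and card_V': "card V' = n'"
    and VQ_subset: "VQ \<subseteq> V'" and card_VQ: "card VQ = m + 1" and u: "u \<in> V" "u \<notin> V'"
    and matching: "perfect_frac_matching V' (induced E V') x'"
    and normal: "b_normal b V' (induced E V') x'"
    and out_weight: "\<forall>v\<in>V'. \<bar>(\<Sum>w\<in>outN (induced E V') v \<inter> VQ. x' (v, w)) - real (m + 1) / real n'\<bar> < c"
    and in_weight: "\<forall>v\<in>V'. \<bar>(\<Sum>w\<in>inN (induced E V') v \<inter> VQ. x' (w, v)) - real (m + 1) / real n'\<bar> < c"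
    and degrees: "\<forall>v\<in>V. (1/2 + (\<epsilon> - 2 * c)) * real (n' - m) \<le> real (card (outN E v \<inter> ((V' - VQ) \<union> {u}))) \<and>
        (1/2 + (\<epsilon> - 2 * c)) * real (n' - m) \<le> real (card (inN E v \<inter> ((V' - VQ) \<union> {u})))"
    and n'_ge: "4 \<le> real n'" and m_sq: "real m ^ 2 \<le> real n'"
    and c: "0 < c" "c \<le> \<epsilon> / 8" and \<epsilon>: "0 < \<epsilon>" "\<epsilon> \<le> 1" "4 \<le> \<epsilon> * real n'"
    and b: "2 \<le> b" "2 * b \<le> real n'"
begin

abbreviation W :: "'a set" where "W \<equiv> V' - VQ"
definition N :: nat where "N = n' - m"
abbreviation \<alpha> :: real where "\<alpha> \<equiv> real n' / real N"
abbreviation A :: "'a set" where "A \<equiv> outN E u \<inter> W"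
abbreviation B :: "'a set" where "B \<equiv> inN E u \<inter> W"

lemma finite_V': "finite V'"
  using digraph V'_subset by (auto simp: digraph_def intro: finite_subset)

lemma no_loop: "(v, v) \<notin> E"
  using digraph by (simp add: digraph_def)

lemma m_less: "m < n'"
  using card_mono[OF finite_V' VQ_subset] card_V' card_VQ by simp

lemma real_N: "real N = real n' - real m"
  using m_less by (simp add: N_def)

lemma card_W_nat: "card W = N - 1"
  using card_Diff_subset[OF finite_subset[OF VQ_subset finite_V'] VQ_subset] card_V' card_VQ
  by (simp add: N_def)

lemma card_W: "real (card W) = real N - 1"
  using card_W_nat m_less by (simp add: N_def)

lemma card_exchanged: "card ((V' - VQ) \<union> {u}) = N"
  using card_W_nat u finite_V' m_less by (simp add: N_def)

lemma N_ge: "real n' / 2 \<le> real N"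
  using le_half_of_square_le[OF n'_ge m_sq] by (simp add: real_N)

lemma N_pos: "0 < real N"
  using N_ge n'_ge by linarith

lemma \<epsilon>_N_ge: "2 \<le> \<epsilon> * real N"
  using mult_left_mono[OF N_ge less_imp_le[OF \<epsilon>(1)]] \<epsilon>(3) by linarith

lemma \<alpha>_bounds: "1 \<le> \<alpha>" "\<alpha> \<le> 2"
  using N_ge N_pos real_N by (auto simp: divide_le_eq le_divide_eq)

lemma degree_bound_W: "real N / 2 + 3/4 * \<epsilon> * real N \<le> (1/2 + (\<epsilon> - 2 * c)) * real N"
proof -
  have "2 * c * real N \<le> \<epsilon> / 4 * real N"
    using c N_pos by (intro mult_right_mono) auto
  moreover have "(1/2 + (\<epsilon> - 2 * c)) * real N = real N / 2 + \<epsilon> * real N - 2 * c * real N"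
    by (simp add: algebra_simps)
  ultimately show ?thesis
    by linarith
qed

lemma degrees_W:
  assumes "v \<in> V"
  shows "real N / 2 \<le> real (card (outN E v \<inter> W))"
    and "real N / 2 \<le> real (card (inN E v \<inter> W))"
    and "real N / 2 + 3/4 * \<epsilon> * real N - 1 \<le> real (card (inN E v \<inter> W))"
proof -
  have ins: "real (card (T \<inter> ((V' - VQ) \<union> {u}))) \<le> real (card (T \<inter> W)) + 1" for T
  proof -
    have "card (T \<inter> ((V' - VQ) \<union> {u})) \<le> card (insert u (T \<inter> W))"
      using finite_V' by (intro card_mono) auto
    also have "\<dots> \<le> card (T \<inter> W) + 1"
      using finite_V' by (simp add: card_insert_if)
    finally show ?thesis
      by simp
  qed
  have "(1/2 + (\<epsilon> - 2 * c)) * real N \<le> real (card (outN E v \<inter> ((V' - VQ) \<union> {u})))"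
    "(1/2 + (\<epsilon> - 2 * c)) * real N \<le> real (card (inN E v \<inter> ((V' - VQ) \<union> {u})))"
    using degrees assms unfolding N_def by auto
  then show "real N / 2 \<le> real (card (outN E v \<inter> W))" "real N / 2 \<le> real (card (inN E v \<inter> W))"
    "real N / 2 + 3/4 * \<epsilon> * real N - 1 \<le> real (card (inN E v \<inter> W))"
    using ins[of "outN E v"] ins[of "inN E v"] degree_bound_W \<epsilon>_N_ge by linarith+
qed

lemma common_in_neighbours:
  assumes "a \<in> W" "a' \<in> W"
  shows "\<epsilon> * real N \<le> real (card (inN E a \<inter> inN E a' \<inter> W))"
proof -
  have "a \<in> V" "a' \<in> V"
    using assms V'_subset by auto
  have "card (inN E a \<inter> W \<union> inN E a' \<inter> W) \<le> card W"
    using finite_V' by (intro card_mono) auto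
  moreover have "card (inN E a \<inter> W \<union> inN E a' \<inter> W) + card (inN E a \<inter> inN E a' \<inter> W)
      = card (inN E a \<inter> W) + card (inN E a' \<inter> W)"
    using card_Un_Int[of "inN E a \<inter> W" "inN E a' \<inter> W"] finite_V' by (simp add: Int_ac)
  ultimately show ?thesis
    using degrees_W(3)[OF \<open>a \<in> V\<close>] degrees_W(3)[OF \<open>a' \<in> V\<close>] card_W \<epsilon>_N_ge by linarith
qed

lemma sum_split_VQ: "(\<Sum>w\<in>T \<inter> V'. f w) = (\<Sum>w\<in>T \<inter> W. f w) + (\<Sum>w\<in>T \<inter> V' \<inter> VQ. f w)"
proof -
  have "(\<Sum>w\<in>T \<inter> W \<union> T \<inter> V' \<inter> VQ. f w) = (\<Sum>w\<in>T \<inter> W. f w) + (\<Sum>w\<in>T \<inter> V' \<inter> VQ. f w)"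
    using finite_V' by (intro sum.union_disjoint) auto
  moreover have "T \<inter> W \<union> T \<inter> V' \<inter> VQ = T \<inter> V'"
    by auto
  ultimately show ?thesis
    by (simp only:)
qed

lemma weight_W:
  assumes "v \<in> W"
  shows "(\<Sum>w\<in>outN E v \<inter> W. x' (v, w)) = 1 - (\<Sum>w\<in>outN (induced E V') v \<inter> VQ. x' (v, w))"
    and "(\<Sum>w\<in>inN E v \<inter> W. x' (w, v)) = 1 - (\<Sum>w\<in>inN (induced E V') v \<inter> VQ. x' (w, v))"
  using matching assms sum_split_VQ[where T = "outN E v" and f = "\<lambda>w. x' (v, w)"]
    sum_split_VQ[where T = "inN E v" and f = "\<lambda>w. x' (w, v)"]
  by (simp_all add: perfect_frac_matching_def)

lemma scaled_weight_deviation: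
  assumes "\<bar>q - real (m + 1) / real n'\<bar> < c"
  shows "\<bar>\<alpha> * (1 - q) - (1 - 1 / real N)\<bar> \<le> 2 * c"
proof -
  define a where "a = \<alpha>"
  have "1 - 1 / real N = a * (1 - real (m + 1) / real n')"
    unfolding a_def using N_pos by (simp add: field_simps real_N)
  then have "a * (1 - q) - (1 - 1 / real N) = a * (real (m + 1) / real n' - q)"
    by (simp add: algebra_simps)
  moreover have "a * \<bar>q - real (m + 1) / real n'\<bar> \<le> 2 * c"
    using mult_mono[OF \<alpha>_bounds(2) less_imp_le[OF assms]] unfolding a_def by simp
  moreover have "0 \<le> a"
    using \<alpha>_bounds(1) unfolding a_def by (rule order_trans[OF zero_le_one])
  ultimately show ?thesis
    unfolding a_def[symmetric] by (simp add: abs_mult abs_minus_commute)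
qed

lemma line_deviations:
  assumes "v \<in> W"
  shows "\<bar>(\<Sum>w\<in>outN E v \<inter> W. \<alpha> * x' (v, w)) - (1 - uniform_on B v)\<bar> \<le> 3 / real N + 2 * c"
    and "\<bar>(\<Sum>w\<in>inN E v \<inter> W. \<alpha> * x' (w, v)) - (1 - uniform_on A v)\<bar> \<le> 3 / real N + 2 * c"
proof -
  have uniform: "uniform_on B v \<le> 2 / real N" "uniform_on A v \<le> 2 / real N"
    using degrees_W(2)[OF u(1)] degrees_W(1)[OF u(1)] by (auto intro!: uniform_on_le[OF N_pos])
  have three: "1 / real N + 2 / real N = 3 / real N"
    by (simp add: add_divide_distrib[symmetric])
  have "\<bar>\<alpha> * (\<Sum>w\<in>outN E v \<inter> W. x' (v, w)) - (1 - 1 / real N)\<bar> \<le> 2 * c"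
    unfolding weight_W[OF assms] using assms out_weight by (intro scaled_weight_deviation) simp
  then show "\<bar>(\<Sum>w\<in>outN E v \<inter> W. \<alpha> * x' (v, w)) - (1 - uniform_on B v)\<bar> \<le> 3 / real N + 2 * c"
    using uniform(1) uniform_on_nonneg[of B v] three
    unfolding sum_distrib_left[symmetric] abs_le_iff by (elim conjE, intro conjI; linarith)
  have "\<bar>\<alpha> * (\<Sum>w\<in>inN E v \<inter> W. x' (w, v)) - (1 - 1 / real N)\<bar> \<le> 2 * c"
    unfolding weight_W[OF assms] using assms in_weight by (intro scaled_weight_deviation) simp
  then show "\<bar>(\<Sum>w\<in>inN E v \<inter> W. \<alpha> * x' (w, v)) - (1 - uniform_on A v)\<bar> \<le> 3 / real N + 2 * c"
    using uniform(2) uniform_on_nonneg[of A v] three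
    unfolding sum_distrib_left[symmetric] abs_le_iff by (elim conjE, intro conjI; linarith)
qed

lemma exists_rebalanced:
  obtains z where "\<forall>v\<in>W. (\<Sum>w\<in>outN E v \<inter> W. z (v, w)) = 1 - uniform_on B v"
    and "\<forall>w\<in>W. (\<Sum>v\<in>inN E w \<inter> W. z (v, w)) = 1 - uniform_on A w"
    and "\<forall>v\<in>W. \<forall>w\<in>W. \<bar>z (v, w) - \<alpha> * x' (v, w)\<bar> \<le> 8 * (3 / real N + 2 * c) / (\<epsilon> * real N)"
proof -
  define r where "r = 3 / real N + 2 * c"
  have r: "0 \<le> r"
    unfolding r_def using N_pos c by simp
  have W: "finite W"
    using finite_V' by simp
  have "A \<noteq> {}" "B \<noteq> {}"
    using degrees_W(1)[OF u(1)] degrees_W(2)[OF u(1)] N_pos by auto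
  then have balanced: "(\<Sum>v\<in>W. 1 - uniform_on B v) = (\<Sum>w\<in>W. 1 - uniform_on A w)"
    using W by (simp add: sum_subtractf sum_uniform_on)
  have pos: "0 < real N / 2" "0 < \<epsilon> * real N"
    using N_pos \<epsilon>_N_ge by auto
  have d: "\<forall>v\<in>W. real N / 2 \<le> real (card (outN E v \<inter> W))"
    using degrees_W(1) V'_subset by auto
  have k: "\<forall>a\<in>W. \<forall>a'\<in>W. \<epsilon> * real N \<le> real (card (inN E a \<inter> inN E a' \<inter> W))"
    using common_in_neighbours by blast
  have rows: "\<forall>v\<in>W. \<bar>(\<Sum>w\<in>outN E v \<inter> W. \<alpha> * x' (v, w)) - (1 - uniform_on B v)\<bar> \<le> r"
    and cols: "\<forall>w\<in>W. \<bar>(\<Sum>v\<in>inN E w \<inter> W. \<alpha> * x' (v, w)) - (1 - uniform_on A w)\<bar> \<le> r"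
    using line_deviations unfolding r_def by blast+
  obtain z where z: "\<forall>v\<in>W. (\<Sum>w\<in>outN E v \<inter> W. z (v, w)) = 1 - uniform_on B v"
    "\<forall>w\<in>W. (\<Sum>v\<in>inN E w \<inter> W. z (v, w)) = 1 - uniform_on A w"
    "\<forall>v\<in>W. \<forall>w\<in>W. \<bar>z (v, w) - \<alpha> * x' (v, w)\<bar> \<le> r / (real N / 2) + 2 * (r + card W * r / (real N / 2)) / (\<epsilon> * real N)"
    using prescribed_line_sums[where z = "\<lambda>e. \<alpha> * x' e", OF W balanced pos(1) d pos(2) k rows cols]
    by blast
  have bound: "r / (real N / 2) + 2 * (r + card W * r / (real N / 2)) / (\<epsilon> * real N)
      \<le> 8 * r / (\<epsilon> * real N)"
    using rebalancing_error_le[OF r \<epsilon>(1,2) N_pos] card_W by simp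
  show thesis
  proof (rule that[OF z(1,2)], intro ballI)
    fix v w assume "v \<in> W" "w \<in> W"
    then show "\<bar>z (v, w) - \<alpha> * x' (v, w)\<bar> \<le> 8 * (3 / real N + 2 * c) / (\<epsilon> * real N)"
      unfolding r_def[symmetric] by (rule order_trans[OF z(3)[rule_format] bound])
  qed
qed

definition exchange_matching :: "('a \<times> 'a \<Rightarrow> real) \<Rightarrow> 'a \<times> 'a \<Rightarrow> real" where
  "exchange_matching z e =
    (if fst e = u then uniform_on A (snd e) else if snd e = u then uniform_on B (fst e) else z e)"

lemma scaled_normal:
  assumes "e \<in> induced E V'"
  shows "1 / (b * real N) \<le> \<alpha> * x' e \<and> \<alpha> * x' e \<le> b / real N"
proof -
  have "1 / (b * real n') \<le> x' e" "x' e \<le> b / real n'"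
    using normal assms card_V' by (auto simp: b_normal_def)
  have "0 \<le> \<alpha>"
    using \<alpha>_bounds(1) by (rule order_trans[OF zero_le_one])
  have "1 / (b * real N) = \<alpha> * (1 / (b * real n'))"
    using n'_ge N_pos by simp
  also have "\<dots> \<le> \<alpha> * x' e"
    using \<open>1 / (b * real n') \<le> x' e\<close> \<open>0 \<le> \<alpha>\<close> by (rule mult_left_mono)
  finally have "1 / (b * real N) \<le> \<alpha> * x' e" .
  moreover have "\<alpha> * x' e \<le> \<alpha> * (b / real n')"
    using \<open>x' e \<le> b / real n'\<close> \<open>0 \<le> \<alpha>\<close> by (rule mult_left_mono)
  moreover have "\<alpha> * (b / real n') = b / real N"
    using n'_ge by simp
  ultimately show ?thesis
    by simp
qed

lemma exchange_matching_normal: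
  assumes "0 < \<delta>" "\<delta> \<le> 1"
    and close: "\<forall>v\<in>W. \<forall>w\<in>W. \<bar>z (v, w) - \<alpha> * x' (v, w)\<bar> \<le> \<delta> / (2 * b * real N)"
  shows "b_normal ((1 + \<delta>) * b) ((V' - VQ) \<union> {u}) (induced E ((V' - VQ) \<union> {u})) (exchange_matching z)"
  unfolding b_normal_def card_exchanged
proof
  fix e assume e: "e \<in> induced E ((V' - VQ) \<union> {u})"
  obtain v w where vw: "e = (v, w)" "(v, w) \<in> E" "v \<in> (V' - VQ) \<union> {u}" "w \<in> (V' - VQ) \<union> {u}"
    using e by (auto simp: induced_def)
  have b': "2 \<le> (1 + \<delta>) * b"
    using assms b by (smt (verit) mult_le_cancel_right1)
  have "card A \<le> card W" "card B \<le> card W"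
    using finite_V' by (auto intro: card_mono)
  then have AB: "real N \<le> 2 * card A" "card A \<le> real N" "real N \<le> 2 * card B" "card B \<le> real N"
    using degrees_W(1)[OF u(1)] degrees_W(2)[OF u(1)] card_W by linarith+
  show "1 / ((1 + \<delta>) * b * real N) \<le> exchange_matching z e \<and> exchange_matching z e \<le> (1 + \<delta>) * b / real N"
  proof (cases "v = u \<or> w = u")
    case True
    then consider "v = u" "w \<in> A" | "w = u" "v \<noteq> u" "v \<in> B"
      using vw no_loop by (auto simp: outN_def inN_def)
    then show ?thesis
    proof cases
      case 1
      then show ?thesis
        using uniform_on_normal[OF b' N_pos AB(1,2)] vw by (simp add: exchange_matching_def)
    next
      case 2
      then show ?thesis
        using uniform_on_normal[OF b' N_pos AB(3,4)] vw by (simp add: exchange_matching_def)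
    qed
  next
    case False
    then have "v \<in> W" "w \<in> W" "(v, w) \<in> induced E V'"
      using vw by (auto simp: induced_def)
    moreover have "exchange_matching z e = z (v, w)"
      using False vw by (simp add: exchange_matching_def)
    moreover have "1 / (b * real N) \<le> \<alpha> * x' (v, w)" "\<alpha> * x' (v, w) \<le> b / real N"
      using scaled_normal[OF \<open>(v, w) \<in> induced E V'\<close>] by auto
    ultimately show ?thesis
      using normal_of_close[OF assms(1,2) b(1) N_pos] close \<open>v \<in> W\<close> \<open>w \<in> W\<close> by simp
  qed
qed

lemma sum_exchanged:
  "(\<Sum>w\<in>T \<inter> ((V' - VQ) \<union> {u}). f w) = (\<Sum>w\<in>T \<inter> W. f w) + (if u \<in> T then f u else 0)"
proof (cases "u \<in> T")
  case True
  then have "T \<inter> ((V' - VQ) \<union> {u}) = insert u (T \<inter> W)"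
    by auto
  then show ?thesis
    using True u finite_V' by (simp add: add.commute)
next
  case False
  then have "T \<inter> ((V' - VQ) \<union> {u}) = T \<inter> W"
    by auto
  then show ?thesis
    using False by simp
qed

lemma exchange_matching_perfect:
  assumes rows: "\<forall>v\<in>W. (\<Sum>w\<in>outN E v \<inter> W. z (v, w)) = 1 - uniform_on B v"
    and cols: "\<forall>w\<in>W. (\<Sum>v\<in>inN E w \<inter> W. z (v, w)) = 1 - uniform_on A w"
    and nonneg: "\<forall>e\<in>induced E ((V' - VQ) \<union> {u}). 0 \<le> exchange_matching z e"
  shows "perfect_frac_matching ((V' - VQ) \<union> {u}) (induced E ((V' - VQ) \<union> {u})) (exchange_matching z)"
proof -
  have "A \<noteq> {}" "B \<noteq> {}"
    using degrees_W(1)[OF u(1)] degrees_W(2)[OF u(1)] N_pos by auto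
  then have uniform: "(\<Sum>w\<in>A. uniform_on A w) = 1" "(\<Sum>v\<in>B. uniform_on B v) = 1"
    using finite_V' by (simp_all add: sum_uniform_on)
  have u_W: "u \<notin> W"
    using u by simp
  have "(\<Sum>w\<in>outN E v \<inter> ((V' - VQ) \<union> {u}). exchange_matching z (v, w)) = 1 \<and>
      (\<Sum>w\<in>inN E v \<inter> ((V' - VQ) \<union> {u}). exchange_matching z (w, v)) = 1"
    if "v \<in> (V' - VQ) \<union> {u}" for v
  proof (cases "v = u")
    case True
    have "(\<Sum>w\<in>outN E u \<inter> W. exchange_matching z (u, w)) = (\<Sum>w\<in>A. uniform_on A w)"
      "(\<Sum>w\<in>inN E u \<inter> W. exchange_matching z (w, u)) = (\<Sum>w\<in>B. uniform_on B w)"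
      using u_W by (auto simp: exchange_matching_def intro!: sum.cong)
    then show ?thesis
      unfolding sum_exchanged using True uniform no_loop by (simp add: outN_def inN_def)
  next
    case False
    then have v: "v \<in> W" "v \<noteq> u"
      using that by auto
    have "(\<Sum>w\<in>outN E v \<inter> W. exchange_matching z (v, w)) = (\<Sum>w\<in>outN E v \<inter> W. z (v, w))"
      "(\<Sum>w\<in>inN E v \<inter> W. exchange_matching z (w, v)) = (\<Sum>w\<in>inN E v \<inter> W. z (w, v))"
      using v u_W by (auto simp: exchange_matching_def intro: sum.cong)
    then have "(\<Sum>w\<in>outN E v \<inter> W. exchange_matching z (v, w)) = 1 - uniform_on B v"
      "(\<Sum>w\<in>inN E v \<inter> W. exchange_matching z (w, v)) = 1 - uniform_on A v"
      using rows cols v by simp_all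
    moreover have "(u \<in> outN E v) = (v \<in> B)" "(u \<in> inN E v) = (v \<in> A)"
      using v by (auto simp: outN_def inN_def)
    ultimately show ?thesis
      unfolding sum_exchanged using v by (auto simp: exchange_matching_def uniform_on_def)
  qed
  then show ?thesis
    using nonneg by (simp add: perfect_frac_matching_def)
qed

lemma x'_pos: "e \<in> induced E V' \<Longrightarrow> 0 < x' e"
  using normal card_V' n'_ge b by (auto simp: b_normal_def intro: order_less_le_trans[rotated])

lemma digraph_V': "digraph V' (induced E V')"
  using digraph_induced[OF digraph V'_subset] .

lemma entropy_V'_bounds:
  "0 \<le> entropy (induced E V') x'" "entropy (induced E V') x' \<le> real n' * log 2 (b * real n')"
proof -
  show "0 \<le> entropy (induced E V') x'"
    using sum_plogp_le_entropy[OF matching digraph_V' empty_subsetI] by simp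
  have "\<forall>e\<in>induced E V'. 1 / (b * real n') \<le> x' e"
    using normal card_V' by (simp add: b_normal_def)
  then show "entropy (induced E V') x' \<le> real n' * log 2 (b * real n')"
    using entropy_le_card_log[OF matching digraph_V'] n'_ge b card_V' by simp
qed

lemma weight_inside_W: "0 \<le> (\<Sum>e\<in>induced E W. x' e)" "(\<Sum>e\<in>induced E W. x' e) \<le> real N - 1"
proof -
  have sub: "induced E W \<subseteq> induced E V'"
    by (auto simp: induced_def)
  then show "0 \<le> (\<Sum>e\<in>induced E W. x' e)"
    using x'_pos by (meson less_imp_le subsetD sum_nonneg)
  have "(\<Sum>w\<in>outN E v \<inter> W. x' (v, w)) \<le> 1" if "v \<in> W" for v
  proof -
    have "0 \<le> (\<Sum>w\<in>outN (induced E V') v \<inter> VQ. x' (v, w))"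
      using x'_pos that by (intro sum_nonneg) (auto simp: outN_def induced_def less_imp_le)
    then show ?thesis
      using weight_W(1)[OF that] by linarith
  qed
  then have "(\<Sum>v\<in>W. \<Sum>w\<in>outN (induced E W) v \<inter> UNIV. x' (v, w)) \<le> (\<Sum>v\<in>W. 1)"
    by (intro sum_mono) simp
  moreover have "induced E W \<subseteq> W \<times> W"
    by (auto simp: induced_def)
  then have "(\<Sum>v\<in>W. \<Sum>w\<in>outN (induced E W) v \<inter> UNIV. x' (v, w)) = (\<Sum>e\<in>induced E W. x' e)"
    using sum_edges_by_tail[where V = W and E = "induced E W" and P = UNIV and g = x'] finite_V'
    by simp
  ultimately show "(\<Sum>e\<in>induced E W. x' e) \<le> real N - 1"
    using card_W by simp
qed

lemma log_\<alpha>_bounds: "0 \<le> log 2 \<alpha>" "log 2 \<alpha> \<le> 2 * real m / real N"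
proof -
  show "0 \<le> log 2 \<alpha>"
    using \<alpha>_bounds by simp
  have "ln \<alpha> \<le> \<alpha> - 1"
    using \<alpha>_bounds by (intro ln_le_minus_one) simp
  also have "\<alpha> - 1 = real m / real N"
    using N_pos by (simp add: field_simps real_N)
  finally show "log 2 \<alpha> \<le> 2 * real m / real N"
    using log_2_le_twice_ln[of \<alpha>] \<alpha>_bounds by simp
qed

lemma bN_bounds: "1 \<le> b * real N" "b \<le> real N"
  using b N_ge N_pos mult_mono[of 2 b 1 "real N"] by auto

lemma plogp_exchange_ge:
  assumes \<delta>: "0 < \<delta>" "\<delta> \<le> 1"
    and close: "\<forall>v\<in>W. \<forall>w\<in>W. \<bar>z (v, w) - \<alpha> * x' (v, w)\<bar> \<le> \<delta> / (2 * b * real N)"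
    and e: "e \<in> induced E W"
  shows "\<alpha> * x' e * log 2 (1 / (\<alpha> * x' e)) - \<delta> / (2 * b * real N) * (log 2 (b * real N) + 4)
    \<le> exchange_matching z e * log 2 (1 / exchange_matching z e)"
proof -
  obtain v w where vw: "e = (v, w)" "v \<in> W" "w \<in> W"
    using e by (auto simp: induced_def)
  have "e \<in> induced E V'"
    using e by (auto simp: induced_def)
  define q where "q = 1 / (b * real N)"
  define t where "t = \<alpha> * x' e"
  define Y where "Y = \<delta> / (2 * b * real N)"
  have "q \<le> t" "t \<le> b / real N"
    using scaled_normal[OF \<open>e \<in> induced E V'\<close>] unfolding q_def t_def by auto
  moreover have "b / real N \<le> 1"
    using bN_bounds N_pos by auto
  ultimately have t: "q \<le> t" "t \<le> 1"
    by auto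
  have "0 < q"
    using bN_bounds unfolding q_def by auto
  have "0 \<le> 2 * b * real N"
    using b(1) by (intro mult_nonneg_nonneg) auto
  then have "\<delta> / (2 * b * real N) \<le> 1 / (2 * b * real N)"
    using \<delta> by (intro divide_right_mono) auto
  moreover have "q / 2 = 1 / (2 * b * real N)"
    unfolding q_def by (simp add: mult.commute mult.left_commute)
  ultimately have "Y \<le> q / 2"
    unfolding Y_def by simp
  have s: "\<bar>z e - t\<bar> \<le> Y"
    using close vw unfolding Y_def t_def by simp
  have "0 < z e" "z e \<le> 2 * t"
    using t \<open>0 < q\<close> \<open>Y \<le> q / 2\<close> abs_le_D1[OF s] abs_le_D2[OF s] by linarith+
  moreover have "exchange_matching z e = z e"
    using vw u by (auto simp: exchange_matching_def)
  ultimately show ?thesis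
    using plogp_perturb[of t "b * real N" "z e" Y] t s \<open>0 < q\<close> bN_bounds
    unfolding q_def t_def Y_def by simp
qed

lemma card_inside_W_error:
  assumes "0 < \<delta>"
  shows "real (card (induced E W)) * (\<delta> / (2 * b * real N) * (log 2 (b * real N) + 4))
    \<le> real n' * \<delta> * (log 2 (b * real n') + 4)"
proof -
  define L where "L = log 2 (b * real N) + 4"
  have L: "0 \<le> L" "L \<le> log 2 (b * real n') + 4"
    unfolding L_def using bN_bounds b N_ge by (auto simp: real_N)
  have "card W \<le> N"
    using card_W by linarith
  then have "card (induced E W) \<le> N * N"
    using card_mono[of "W \<times> W" "induced E W"] finite_V' mult_le_mono[of "card W" N "card W" N]
    by (auto simp: induced_def card_cartesian_product)
  then have "real (card (induced E W)) \<le> real N * real N"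
    by (metis of_nat_le_iff of_nat_mult)
  moreover have "0 \<le> \<delta> / (2 * b * real N) * L"
    using L assms b N_pos by simp
  ultimately have "real (card (induced E W)) * (\<delta> / (2 * b * real N) * L)
      \<le> real N * real N * (\<delta> / (2 * b * real N) * L)"
    by (rule mult_right_mono)
  also have "\<dots> = real N * \<delta> * L / (2 * b)"
    using N_pos b by (simp add: field_simps)
  also have "\<dots> \<le> real N * \<delta> * L / 1"
    using N_pos assms L b by (intro divide_left_mono) auto
  also have "\<dots> \<le> real n' * \<delta> * (log 2 (b * real n') + 4)"
    using N_pos assms L real_N by (simp add: mult_mono)
  finally show ?thesis
    unfolding L_def .
qed

lemma sum_plogp_exchange_ge:
  assumes \<delta>: "0 < \<delta>" "\<delta> \<le> 1"
    and close: "\<forall>v\<in>W. \<forall>w\<in>W. \<bar>z (v, w) - \<alpha> * x' (v, w)\<bar> \<le> \<delta> / (2 * b * real N)"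
  shows "\<alpha> * (\<Sum>e\<in>induced E W. x' e * log 2 (1 / x' e)) - \<alpha> * log 2 \<alpha> * (\<Sum>e\<in>induced E W. x' e)
      - real n' * \<delta> * (log 2 (b * real n') + 4)
    \<le> (\<Sum>e\<in>induced E W. exchange_matching z e * log 2 (1 / exchange_matching z e))"
proof -
  have "(\<Sum>e\<in>induced E W. \<alpha> * x' e * log 2 (1 / (\<alpha> * x' e)))
      - real (card (induced E W)) * (\<delta> / (2 * b * real N) * (log 2 (b * real N) + 4))
      \<le> (\<Sum>e\<in>induced E W. exchange_matching z e * log 2 (1 / exchange_matching z e))"
    using sum_mono[OF plogp_exchange_ge[OF \<delta> close]] by (simp add: sum_subtractf)
  moreover have "(\<Sum>e\<in>induced E W. \<alpha> * x' e * log 2 (1 / (\<alpha> * x' e)))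
      = \<alpha> * (\<Sum>e\<in>induced E W. x' e * log 2 (1 / x' e)) - \<alpha> * log 2 \<alpha> * (\<Sum>e\<in>induced E W. x' e)"
    using \<alpha>_bounds x'_pos by (intro sum_plogp_scale) (auto simp: induced_def)
  ultimately show ?thesis
    using card_inside_W_error[OF \<delta>(1)] by linarith
qed

lemma log_bn'_le: "0 \<le> log 2 (b * real n')" "log 2 (b * real n') \<le> 4 * ln (real n')"
proof -
  have "1 \<le> b * real n'"
    using b n'_ge mult_mono[of 1 b 1 "real n'"] by auto
  then show "0 \<le> log 2 (b * real n')"
    by simp
  have "ln (b * real n') \<le> ln (real n' * real n')"
    using b n'_ge \<open>1 \<le> b * real n'\<close> by (subst ln_le_cancel_iff) (auto intro: mult_right_mono)
  moreover have "ln (real n' * real n') = 2 * ln (real n')"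
    using n'_ge by (simp add: ln_mult)
  moreover have "log 2 (b * real n') \<le> 2 * ln (b * real n')"
    using \<open>1 \<le> b * real n'\<close> by (intro log_2_le_twice_ln) simp
  ultimately show "log 2 (b * real n') \<le> 4 * ln (real n')"
    by linarith
qed

lemma exchange_matching_entropy:
  assumes pfm: "perfect_frac_matching ((V' - VQ) \<union> {u}) (induced E ((V' - VQ) \<union> {u})) (exchange_matching z)"
    and \<delta>: "0 < \<delta>" "\<delta> \<le> 1"
    and close: "\<forall>v\<in>W. \<forall>w\<in>W. \<bar>z (v, w) - \<alpha> * x' (v, w)\<bar> \<le> \<delta> / (2 * b * real N)"
    and out_entropy: "\<forall>v\<in>V'. \<bar>(\<Sum>w\<in>outN (induced E V') v \<inter> VQ. x' (v, w) * log 2 (1 / x' (v, w)))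
        - real (m + 1) / real n' * hplus (induced E V') x' v\<bar> < c"
    and in_entropy: "\<forall>v\<in>V'. \<bar>(\<Sum>w\<in>inN (induced E V') v \<inter> VQ. x' (w, v) * log 2 (1 / x' (w, v)))
        - real (m + 1) / real n' * hminus (induced E V') x' v\<bar> < c"
    and S: "24 * ln (real n') + 4 * real n' * c + 4 + real n' * \<delta> * (4 * ln (real n') + 4) \<le> S"
  shows "real N / real n' * entropy (induced E V') x' - real N * log 2 \<alpha> - S
    \<le> entropy (induced E ((V' - VQ) \<union> {u})) (exchange_matching z)"
proof -
  define K where "K = log 2 (b * real n')"
  have "digraph ((V' - VQ) \<union> {u}) (induced E ((V' - VQ) \<union> {u}))"
    using digraph V'_subset u by (intro digraph_induced) auto
  then have "(\<Sum>e\<in>induced E W. exchange_matching z e * log 2 (1 / exchange_matching z e))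
      \<le> entropy (induced E ((V' - VQ) \<union> {u})) (exchange_matching z)"
    by (intro sum_plogp_le_entropy[OF pfm]) (auto simp: induced_def)
  then have inside: "\<alpha> * (\<Sum>e\<in>induced E W. x' e * log 2 (1 / x' e)) - \<alpha> * log 2 \<alpha> * (\<Sum>e\<in>induced E W. x' e)
      - real n' * \<delta> * (K + 4) \<le> entropy (induced E ((V' - VQ) \<union> {u})) (exchange_matching z)"
    using sum_plogp_exchange_ge[OF \<delta> close] unfolding K_def by linarith
  have out': "\<forall>v\<in>V'. (\<Sum>w\<in>outN (induced E V') v \<inter> VQ. x' (v, w) * log 2 (1 / x' (v, w)))
      \<le> real (m + 1) / real n' * hplus (induced E V') x' v + c"
    using out_entropy by (smt (verit) ballI)
  have in': "\<forall>v\<in>V'. (\<Sum>w\<in>inN (induced E V') v \<inter> VQ. x' (w, v) * log 2 (1 / x' (w, v)))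
      \<le> real (m + 1) / real n' * hminus (induced E V') x' v + c"
    using in_entropy by (smt (verit) ballI)
  have "induced (induced E V') (V' - VQ) = induced E W"
    by (auto simp: induced_def)
  then have "(1 - 2 * (real (m + 1) / real n')) * entropy (induced E V') x' - 2 * real n' * c
      \<le> (\<Sum>e\<in>induced E W. x' e * log 2 (1 / x' e))"
    using entropy_induced_diff_ge[OF matching digraph_V' out' in'] unfolding card_V' by simp
  note outside = this[unfolded of_nat_add of_nat_1]
  have "6 * K + 4 * real n' * c + 4 + real n' * \<delta> * (K + 4) \<le> S"
  proof -
    have "real n' * \<delta> * (K + 4) \<le> real n' * \<delta> * (4 * ln (real n') + 4)"
      using log_bn'_le \<delta> n'_ge unfolding K_def by (intro mult_left_mono) auto
    then show ?thesis
      using S log_bn'_le unfolding K_def by linarith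
  qed
  moreover have "0 < real n'" "0 \<le> real m"
    using n'_ge by auto
  ultimately show ?thesis
    by (intro entropy_bound_arith[OF _ real_N N_ge _ m_sq entropy_V'_bounds[folded K_def]
        log_bn'_le(1)[folded K_def] outside weight_inside_W log_\<alpha>_bounds inside _ c(1)])
qed

lemma exists_exchange_matching:
  assumes \<delta>: "0 < \<delta>" "\<delta> \<le> 1" and \<delta>_large: "16 * b * (6 / real n' + 2 * c) \<le> \<epsilon> * \<delta>"
    and out_entropy: "\<forall>v\<in>V'. \<bar>(\<Sum>w\<in>outN (induced E V') v \<inter> VQ. x' (v, w) * log 2 (1 / x' (v, w)))
        - real (m + 1) / real n' * hplus (induced E V') x' v\<bar> < c"
    and in_entropy: "\<forall>v\<in>V'. \<bar>(\<Sum>w\<in>inN (induced E V') v \<inter> VQ. x' (w, v) * log 2 (1 / x' (w, v)))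
        - real (m + 1) / real n' * hminus (induced E V') x' v\<bar> < c"
    and S: "24 * ln (real n') + 4 * real n' * c + 4 + real n' * \<delta> * (4 * ln (real n') + 4) \<le> S"
  shows "\<exists>x''. perfect_frac_matching ((V' - VQ) \<union> {u}) (induced E ((V' - VQ) \<union> {u})) x'' \<and>
    b_normal ((1 + \<delta>) * b) ((V' - VQ) \<union> {u}) (induced E ((V' - VQ) \<union> {u})) x'' \<and>
    entropy (induced E ((V' - VQ) \<union> {u})) x'' \<ge> real (n' - m) / real n' * entropy (induced E V') x'
      - real (n' - m) * log 2 (real n' / real (n' - m)) - S"
proof -
  obtain z where rows: "\<forall>v\<in>W. (\<Sum>w\<in>outN E v \<inter> W. z (v, w)) = 1 - uniform_on B v"
    and cols: "\<forall>w\<in>W. (\<Sum>v\<in>inN E w \<inter> W. z (v, w)) = 1 - uniform_on A w"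
    and close8: "\<forall>v\<in>W. \<forall>w\<in>W. \<bar>z (v, w) - \<alpha> * x' (v, w)\<bar> \<le> 8 * (3 / real N + 2 * c) / (\<epsilon> * real N)"
    by (rule exists_rebalanced)
  have "3 / real N \<le> 6 / real n'"
    using N_ge N_pos n'_ge by (simp add: field_simps)
  then have "16 * b * (3 / real N + 2 * c) \<le> \<epsilon> * \<delta>"
    using \<delta>_large b mult_left_mono[of "3 / real N + 2 * c" "6 / real n' + 2 * c" "16 * b"] by linarith
  then have "16 * b * (3 / real N + 2 * c) / (\<epsilon> * (2 * b * real N)) \<le> \<epsilon> * \<delta> / (\<epsilon> * (2 * b * real N))"
    using \<epsilon> N_pos b by (intro divide_right_mono) auto
  moreover have "16 * b * (3 / real N + 2 * c) / (\<epsilon> * (2 * b * real N)) = 8 * (3 / real N + 2 * c) / (\<epsilon> * real N)"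
    "\<epsilon> * \<delta> / (\<epsilon> * (2 * b * real N)) = \<delta> / (2 * b * real N)"
    using \<epsilon> b N_pos by (simp_all add: field_simps)
  ultimately have "8 * (3 / real N + 2 * c) / (\<epsilon> * real N) \<le> \<delta> / (2 * b * real N)"
    by simp
  then have close: "\<forall>v\<in>W. \<forall>w\<in>W. \<bar>z (v, w) - \<alpha> * x' (v, w)\<bar> \<le> \<delta> / (2 * b * real N)"
    using close8 by (meson order_trans)
  have normal'': "b_normal ((1 + \<delta>) * b) ((V' - VQ) \<union> {u}) (induced E ((V' - VQ) \<union> {u})) (exchange_matching z)"
    by (rule exchange_matching_normal[OF \<delta> close])
  have "0 < 1 / ((1 + \<delta>) * b * real N)"
    using \<delta> b N_pos by simp
  moreover have "\<forall>e\<in>induced E ((V' - VQ) \<union> {u}). 1 / ((1 + \<delta>) * b * real N) \<le> exchange_matching z e"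
    using normal'' unfolding b_normal_def card_exchanged by blast
  ultimately have "\<forall>e\<in>induced E ((V' - VQ) \<union> {u}). 0 \<le> exchange_matching z e"
    by (meson less_le_trans less_imp_le)
  then have pfm: "perfect_frac_matching ((V' - VQ) \<union> {u}) (induced E ((V' - VQ) \<union> {u})) (exchange_matching z)"
    by (rule exchange_matching_perfect[OF rows cols])
  show ?thesis
    using pfm normal'' exchange_matching_entropy[OF pfm \<delta> close out_entropy in_entropy S]
    unfolding N_def by auto
qed

end

lemma well_behaved_neighbourhoods:
  assumes "well_behaved V E V' x M" "v \<in> V"
  shows "\<bar>real (card (outN E v \<inter> V' \<inter> M)) - real (card M) / real (card V') * real (card (outN E v \<inter> V'))\<bar>
      < real (card V') powr (1/4 - 1 / (17 * sqrt (ln (real (card V')))))"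
    and "\<bar>real (card (inN E v \<inter> V' \<inter> M)) - real (card M) / real (card V') * real (card (inN E v \<inter> V'))\<bar>
      < real (card V') powr (1/4 - 1 / (17 * sqrt (ln (real (card V')))))"
proof -
  have "outN E v \<inter> V' \<in> nbhd_family V E V'" "inN E v \<inter> V' \<in> nbhd_family V E V'"
    using assms(2) unfolding nbhd_family_def by blast+
  moreover have "M \<inter> (outN E v \<inter> V') = outN E v \<inter> V' \<inter> M" "M \<inter> (inN E v \<inter> V') = inN E v \<inter> V' \<inter> M"
    by auto
  ultimately show "\<bar>real (card (outN E v \<inter> V' \<inter> M)) - real (card M) / real (card V') * real (card (outN E v \<inter> V'))\<bar>
      < real (card V') powr (1/4 - 1 / (17 * sqrt (ln (real (card V')))))"
    "\<bar>real (card (inN E v \<inter> V' \<inter> M)) - real (card M) / real (card V') * real (card (inN E v \<inter> V'))\<bar>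
      < real (card V') powr (1/4 - 1 / (17 * sqrt (ln (real (card V')))))"
    using assms(1) unfolding well_behaved_def Let_def by metis+
qed

lemma degree_after_exchange:
  fixes e c \<epsilon> :: real
  assumes "finite V'" "VQ \<subseteq> V'" "card V' = n'" "card VQ = m + 1"
    and "(1/2 + \<epsilon>) * real n' \<le> real (card (T \<inter> V'))"
    and "\<bar>real (card (T \<inter> V' \<inter> VQ)) - real (m + 1) / real n' * real (card (T \<inter> V'))\<bar> \<le> e"
    and "3/2 + e \<le> c * real n'" "real m \<le> real n' / 2" "0 < \<epsilon>" "\<epsilon> \<le> 1" "0 < c"
  shows "(1/2 + (\<epsilon> - 2 * c)) * real (n' - m) \<le> real (card (T \<inter> ((V' - VQ) \<union> {u})))"
proof -
  have "m + 1 \<le> n'"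
    using card_mono[OF assms(1,2)] assms(3,4) by simp
  have "card (T \<inter> V') - card (T \<inter> V' \<inter> VQ) = card (T \<inter> V' - VQ)"
    using assms(1) by (simp add: card_Diff_subset_Int Int_assoc)
  also have "\<dots> \<le> card (T \<inter> ((V' - VQ) \<union> {u}))"
    using assms(1) by (intro card_mono) auto
  finally have lower: "real (card (T \<inter> V')) - real (card (T \<inter> V' \<inter> VQ)) \<le> real (card (T \<inter> ((V' - VQ) \<union> {u})))"
    using card_mono[of "T \<inter> V'" "T \<inter> V' \<inter> VQ"] assms(1) by (simp add: of_nat_diff)
  have "real (card (T \<inter> V' \<inter> VQ)) \<le> real (m + 1) / real n' * real (card (T \<inter> V')) + e"
    using abs_le_D1[OF assms(6)] by linarith
  from this[unfolded of_nat_add of_nat_1]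
  have "(1/2 + (\<epsilon> - 2 * c)) * (real n' - real m) \<le> real (card (T \<inter> V')) - real (card (T \<inter> V' \<inter> VQ))"
    by (rule degree_bound_arith[OF assms(5) _ assms(7)]) (use assms \<open>m + 1 \<le> n'\<close> in auto)
  moreover have "real (n' - m) = real n' - real m"
    using \<open>m + 1 \<le> n'\<close> by simp
  ultimately show ?thesis
    using lower by (simp only:)
qed

lemma tree_size_sq_le:
  fixes \<gamma> :: real
  assumes "\<gamma> \<le> 1" "1 \<le> x" "card VQ = m + 1"
    and "real (card VQ) \<le> 3 * exp (\<gamma> * sqrt (ln x)) * x powr (1/4)"
    and "(3 * exp (sqrt (ln x)) * x powr (1/4))\<^sup>2 \<le> x"
  shows "real m ^ 2 \<le> x"
proof -
  have "\<gamma> * sqrt (ln x) \<le> sqrt (ln x)"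
    using assms(1,2) mult_right_mono[of \<gamma> 1 "sqrt (ln x)"] by simp
  then have "real (card VQ) \<le> 3 * exp (sqrt (ln x)) * x powr (1/4)"
    using assms(4) by (smt (verit) exp_le_cancel_iff mult_right_mono powr_ge_zero)
  then have "real m ^ 2 \<le> (3 * exp (sqrt (ln x)) * x powr (1/4))\<^sup>2"
    using assms(3) by (intro power_mono) auto
  then show ?thesis
    using assms(5) by linarith
qed

lemma well_behaved_weights:
  assumes "well_behaved V E V' x M"
  defines "c \<equiv> real (card V') powr (- 3/4 - 1 / (18 * sqrt (ln (real (card V')))))"
  shows "\<forall>v\<in>V'. \<bar>(\<Sum>w\<in>outN (induced E V') v \<inter> M. x (v, w)) - real (card M) / real (card V')\<bar> < c"
    and "\<forall>v\<in>V'. \<bar>(\<Sum>w\<in>inN (induced E V') v \<inter> M. x (w, v)) - real (card M) / real (card V')\<bar> < c"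
    and "\<forall>v\<in>V'. \<bar>(\<Sum>w\<in>outN (induced E V') v \<inter> M. x (v, w) * log 2 (1 / x (v, w)))
        - real (card M) / real (card V') * hplus (induced E V') x v\<bar> < c"
    and "\<forall>v\<in>V'. \<bar>(\<Sum>w\<in>inN (induced E V') v \<inter> M. x (w, v) * log 2 (1 / x (w, v)))
        - real (card M) / real (card V') * hminus (induced E V') x v\<bar> < c"
  using assms unfolding well_behaved_def Let_def by blast+

lemma lemma6p4_fixed_sizes:
  fixes \<epsilon> \<epsilon>' b \<gamma> :: real and n n' m :: nat and V V' VQ :: "'a set" and E :: "('a \<times> 'a) set"
  assumes \<epsilon>': "0 < \<epsilon>'" "\<epsilon>' \<le> 1" and b: "2 \<le> b" and \<gamma>: "\<gamma> \<le> 1"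
    and large: "large_enough \<epsilon>' b (real n')"
    and G: "eps_digraph n \<epsilon> V E" and V': "V' \<subseteq> V" "card V' = n'"
    and matching: "perfect_frac_matching V' (induced E V') x'"
    and degrees: "\<forall>v\<in>V. real (card (outN E v \<inter> V')) \<ge> (1/2 + \<epsilon>') * real n' \<and>
                        real (card (inN E v \<inter> V')) \<ge> (1/2 + \<epsilon>') * real n'"
    and VQ: "VQ \<subseteq> V'" "card VQ = m + 1"
    and tree_size: "real (card VQ) \<le> 3 * exp (\<gamma> * sqrt (ln (real n'))) * real n' powr (1/4)"
    and well_behaved: "well_behaved V E V' x' VQ"
    and u: "u \<in> V - V'"
  shows "(\<forall>v\<in>V.
       \<bar>real (card (outN E v \<inter> V' \<inter> VQ)) - real (m + 1) / real n' * real (card (outN E v \<inter> V'))\<bar>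
         \<le> real n' powr (1/4 - 1 / (17 * sqrt (ln (real n')))) \<and>
       \<bar>real (card (inN E v \<inter> V' \<inter> VQ)) - real (m + 1) / real n' * real (card (inN E v \<inter> V'))\<bar>
         \<le> real n' powr (1/4 - 1 / (17 * sqrt (ln (real n'))))) \<and>
    (\<forall>v\<in>V. real (card (outN E v \<inter> ((V' - VQ) \<union> {u})))
         \<ge> (1/2 + (\<epsilon>' - 2 * real n' powr (- 3/4 - 1 / (18 * sqrt (ln (real n')))))) * real (n' - m) \<and>
       real (card (inN E v \<inter> ((V' - VQ) \<union> {u})))
         \<ge> (1/2 + (\<epsilon>' - 2 * real n' powr (- 3/4 - 1 / (18 * sqrt (ln (real n')))))) * real (n' - m)) \<and>
    eps_digraph (n' - m) (\<epsilon>' - 2 * real n' powr (- 3/4 - 1 / (18 * sqrt (ln (real n')))))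
      ((V' - VQ) \<union> {u}) (induced E ((V' - VQ) \<union> {u})) \<and>
    (b_normal b V' (induced E V') x' \<longrightarrow>
      (\<exists>x''. perfect_frac_matching ((V' - VQ) \<union> {u}) (induced E ((V' - VQ) \<union> {u})) x'' \<and>
         b_normal ((1 + real n' powr (- 3/4 - 1 / (22 * sqrt (ln (real n'))))) * b)
           ((V' - VQ) \<union> {u}) (induced E ((V' - VQ) \<union> {u})) x'' \<and>
         entropy (induced E ((V' - VQ) \<union> {u})) x'' \<ge> real (n' - m) / real n' * entropy (induced E V') x'
           - real (n' - m) * log 2 (real n' / real (n' - m))
           - real n' powr (1/4 - 1 / (24 * sqrt (ln (real n'))))))"
proof -
  define c where "c = real n' powr (- 3/4 - 1 / (18 * sqrt (ln (real n'))))"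
  define e where "e = real n' powr (1/4 - 1 / (17 * sqrt (ln (real n'))))"
  define \<delta> where "\<delta> = real n' powr (- 3/4 - 1 / (22 * sqrt (ln (real n'))))"
  define S where "S = real n' powr (1/4 - 1 / (24 * sqrt (ln (real n'))))"
  have n': "4 \<le> real n'" "2 * b \<le> real n'" "4 \<le> \<epsilon>' * real n'"
    and tree_bound: "(3 * exp (sqrt (ln (real n'))) * real n' powr (1/4))\<^sup>2 \<le> real n'"
    and c: "c \<le> \<epsilon>' / 8" "3/2 + e \<le> c * real n'"
    and \<delta>: "\<delta> \<le> 1" "16 * b * (6 / real n' + 2 * c) \<le> \<epsilon>' * \<delta>"
    and S: "24 * ln (real n') + 4 * real n' * c + 4 + real n' * \<delta> * (4 * ln (real n') + 4) \<le> S"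
    using large unfolding large_enough_def Let_def c_def e_def \<delta>_def S_def by auto
  have "0 < c" "0 < \<delta>"
    using n' unfolding c_def \<delta>_def by simp_all
  have digraph: "digraph V E"
    using G by (simp add: eps_digraph_def)
  have finite: "finite V'"
    using digraph V' by (auto simp: digraph_def intro: finite_subset)
  have m_sq: "real m ^ 2 \<le> real n'"
    using tree_size_sq_le[OF \<gamma> _ VQ(2) tree_size tree_bound] n' by simp
  note neighbourhoods = well_behaved_neighbourhoods[OF well_behaved, unfolded V'(2) VQ(2), folded e_def]
  have part2: "\<forall>v\<in>V. real (card (outN E v \<inter> ((V' - VQ) \<union> {u}))) \<ge> (1/2 + (\<epsilon>' - 2 * c)) * real (n' - m) \<and>
      real (card (inN E v \<inter> ((V' - VQ) \<union> {u}))) \<ge> (1/2 + (\<epsilon>' - 2 * c)) * real (n' - m)"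
  proof
    fix v assume "v \<in> V"
    note exchange = degree_after_exchange[OF finite VQ(1) V'(2) VQ(2) _ _ c(2)
        le_half_of_square_le[OF n'(1) m_sq] \<epsilon>' \<open>0 < c\<close>]
    show "real (card (outN E v \<inter> ((V' - VQ) \<union> {u}))) \<ge> (1/2 + (\<epsilon>' - 2 * c)) * real (n' - m) \<and>
        real (card (inN E v \<inter> ((V' - VQ) \<union> {u}))) \<ge> (1/2 + (\<epsilon>' - 2 * c)) * real (n' - m)"
      using degrees \<open>v \<in> V\<close>
      by (intro conjI exchange less_imp_le[OF neighbourhoods(1)] less_imp_le[OF neighbourhoods(2)]) auto
  qed
  have "card ((V' - VQ) \<union> {u}) = n' - m"
    using card_Diff_subset[OF finite_subset[OF VQ(1) finite] VQ(1)] card_mono[OF finite VQ(1)] V'(2) VQ(2) u finite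
    by simp
  moreover have "(V' - VQ) \<union> {u} \<subseteq> V"
    using V' u by auto
  ultimately have part3: "eps_digraph (n' - m) (\<epsilon>' - 2 * c) ((V' - VQ) \<union> {u}) (induced E ((V' - VQ) \<union> {u}))"
    using part2 by (intro eps_digraph_induced[OF digraph]) auto
  have part4: "\<exists>x''. perfect_frac_matching ((V' - VQ) \<union> {u}) (induced E ((V' - VQ) \<union> {u})) x'' \<and>
      b_normal ((1 + \<delta>) * b) ((V' - VQ) \<union> {u}) (induced E ((V' - VQ) \<union> {u})) x'' \<and>
      entropy (induced E ((V' - VQ) \<union> {u})) x'' \<ge> real (n' - m) / real n' * entropy (induced E V') x'
        - real (n' - m) * log 2 (real n' / real (n' - m)) - S"
    if normal: "b_normal b V' (induced E V') x'"
  proof -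
    note weights = well_behaved_weights[OF well_behaved, unfolded V'(2) VQ(2), folded c_def]
    interpret tree_exchange V E V' VQ u x' n' m b c \<epsilon>'
      using digraph V' VQ u matching normal weights(1,2) part2 n' m_sq \<open>0 < c\<close> c \<epsilon>' b
      by unfold_locales auto
    show ?thesis
      by (rule exists_exchange_matching[OF \<open>0 < \<delta>\<close> \<delta> weights(3,4) S])
  qed
  show ?thesis
    using neighbourhoods part2 part3 part4 unfolding c_def e_def \<delta>_def S_def
    by (auto intro: less_imp_le)
qed

theorem lemma6p4:
  shows "\<forall>\<epsilon> \<epsilon>'::real. 0 < \<epsilon> \<and> \<epsilon> \<le> 1 \<and> 0 < \<epsilon>' \<and> \<epsilon>' \<le> 1 \<longrightarrow>
    (\<exists>b0::real. \<forall>b\<ge>b0. \<exists>\<gamma>0::real. \<gamma>0 > 0 \<and>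
      (\<forall>\<gamma>. 0 < \<gamma> \<and> \<gamma> \<le> \<gamma>0 \<longrightarrow>
        (\<exists>N0::nat. \<forall>n n'. N0 \<le> n \<and> N0 \<le> n' \<longrightarrow>
          (\<forall>(V::nat set) E V' x' VQ EQ (m::nat) u.
            let D = exp (\<gamma> * sqrt (ln (real n')));
                E' = induced E V';
                n'' = n' - m;
                \<epsilon>'' = \<epsilon>' - 2 * real n' powr (- 3/4 - 1 / (18 * sqrt (ln (real n'))));
                V'' = (V' - VQ) \<union> {u};
                E'' = induced E V''
            in
            eps_digraph n \<epsilon> V E \<and>
            V' \<subseteq> V \<and> card V' = n' \<and>
            perfect_frac_matching V' E' x' \<and>
            (\<forall>v\<in>V. real (card (outN E v \<inter> V')) \<ge> (1/2 + \<epsilon>') * real n' \<and>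
                    real (card (inN E v \<inter> V')) \<ge> (1/2 + \<epsilon>') * real n') \<and>
            oriented_tree VQ EQ \<and> VQ \<subseteq> V' \<and> EQ \<subseteq> E' \<and>
            card VQ = m + 1 \<and>
            real n' powr (1/4) + 1 \<le> real (card VQ) \<and>
            real (card VQ) \<le> 3 * D * real n' powr (1/4) \<and>
            (\<forall>q\<in>VQ. real (und_degree EQ q) \<le> D) \<and>
            well_behaved V E V' x' VQ \<and>
            u \<in> V - V'
            \<longrightarrow>
            (\<forall>v\<in>V.
               \<bar>real (card (outN E v \<inter> V' \<inter> VQ))
                 - real (m + 1) / real n' * real (card (outN E v \<inter> V'))\<bar>
                 \<le> real n' powr (1/4 - 1 / (17 * sqrt (ln (real n')))) \<and>
               \<bar>real (card (inN E v \<inter> V' \<inter> VQ))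
                 - real (m + 1) / real n' * real (card (inN E v \<inter> V'))\<bar>
                 \<le> real n' powr (1/4 - 1 / (17 * sqrt (ln (real n'))))) \<and>
            (\<forall>v\<in>V. real (card (outN E v \<inter> V'')) \<ge> (1/2 + \<epsilon>'') * real n'' \<and>
                    real (card (inN E v \<inter> V'')) \<ge> (1/2 + \<epsilon>'') * real n'') \<and>
            eps_digraph n'' \<epsilon>'' V'' E'' \<and>
            (b_normal b V' E' x' \<longrightarrow>
              (\<exists>x''. perfect_frac_matching V'' E'' x'' \<and>
                 b_normal ((1 + real n' powr (- 3/4 - 1 / (22 * sqrt (ln (real n'))))) * b)
                   V'' E'' x'' \<and>
                 entropy E'' x'' \<ge> real n'' / real n' * entropy E' x'
                   - real n'' * log 2 (real n' / real n'')
                   - real n' powr (1/4 - 1 / (24 * sqrt (ln (real n'))))))))))"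
  apply (intro allI impI)
  apply (rule exI[of _ "2::real"], intro allI impI)
  apply (rule exI[of _ "1::real"], intro conjI allI impI, simp)
  subgoal premises prems for \<epsilon> \<epsilon>' b \<gamma>
  proof -
    have \<epsilon>': "0 < \<epsilon>'" "\<epsilon>' \<le> 1" and b: "2 \<le> b" and \<gamma>: "\<gamma> \<le> 1"
      using prems by auto
    obtain N0 where N0: "\<forall>n'\<ge>N0. large_enough \<epsilon>' b (real n')"
      using eventually_large_enough[OF \<epsilon>'(1), of b] b unfolding eventually_sequentially by auto
    show ?thesis
      unfolding Let_def
      by (intro exI[of _ N0] allI impI, elim conjE)
        (rule lemma6p4_fixed_sizes[OF \<epsilon>' b \<gamma>]; (assumption | rule N0[rule_format]; assumption))
  qed
  done

end
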